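(* Let $T$ be a triangulation of a finite planar point set $P$, let $l$ be a vertical separating line w.r.t. $P$, and let $e$ be an edge of $T$ that is good with respect to $l$. Then $e$ is an edge of the (unique) T-path $\pi_l(T)$.
   Context: A triangulation of $P$ is a crossing-free straight-line plane graph on $P$ whose outer face boundary is the boundary of $\mathrm{CH}(P)$ and all of whose bounded faces are empty triangles. A separating line w.r.t. $P$ is a line $l$ with $l\cap P=\emptyset$ and $l\cap\mathrm{CH}(P)\ne\emptyset$. The T-path $\pi_l(T)$ is the chain of edges of $T$ such that (1) every edge intersects $l$; (2) the first and last edges are the two edges of $\mathrm{CH}(P)$ intersected by $l$; (3) the region bounded by any two consecutive edges of the chain and $l$ contains no point of $P$ (it exists and is unique). An edge $e$ of $T$ not on $\mathrm{CH}(P)$ is flippable if the union of the two triangles of $T$ sharing $e$ is a convex quadrilateral; the two vertices of this quadrilateral not on $e$ are the opposite vertices of $e$. An edge $e$ of $T$ properly intersecting $l$ is good w.r.t. $l$ if it is flippable and its two opposite vertices lie on different sides of $l$. *)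

theory Defs
  imports "HOL-Analysis.Analysis"
begin

type_synonym pt = "real \<times> real"

definition general_position :: "pt set \<Rightarrow> bool" where
  "general_position P \<longleftrightarrow>
     (\<forall>a\<in>P. \<forall>b\<in>P. \<forall>c\<in>P. a \<noteq> b \<and> a \<noteq> c \<and> b \<noteq> c \<longrightarrow> \<not> collinear {a, b, c})"

definition triangulation :: "pt set \<Rightarrow> pt set set \<Rightarrow> bool" where
  "triangulation P T \<longleftrightarrow> finite P \<and>
     (\<forall>t\<in>T. t \<subseteq> P \<and> card t = 3 \<and> \<not> collinear t \<and> convex hull t \<inter> P = t) \<and>
     (\<forall>t\<in>T. \<forall>t'\<in>T. t \<noteq> t' \<longrightarrow> interior (convex hull t) \<inter> interior (convex hull t') = {}) \<and>
     \<Union> ((\<lambda>t. convex hull t) ` T) = convex hull P"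

definition edges_of :: "pt set set \<Rightarrow> pt set set" where
  "edges_of T = {{a, b} | a b. a \<noteq> b \<and> (\<exists>t\<in>T. a \<in> t \<and> b \<in> t)}"

definition hull_edge :: "pt set \<Rightarrow> pt set \<Rightarrow> bool" where
  "hull_edge P e \<longleftrightarrow> (\<exists>a b. e = {a, b} \<and> a \<noteq> b \<and> a \<in> P \<and> b \<in> P) \<and>
     convex hull e \<subseteq> frontier (convex hull P)"

definition vline :: "real \<Rightarrow> pt set" where
  "vline c = {x. fst x = c}"

definition separating_vline :: "pt set \<Rightarrow> real \<Rightarrow> bool" where
  "separating_vline P c \<longleftrightarrow> vline c \<inter> P = {} \<and> vline c \<inter> convex hull P \<noteq> {}"

definition crosses :: "real \<Rightarrow> pt set \<Rightarrow> bool" where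
  "crosses c e \<longleftrightarrow> (\<exists>a b. e = {a, b} \<and> fst a < c \<and> c < fst b)"

definition opposite_vertices :: "pt set set \<Rightarrow> pt set \<Rightarrow> pt \<Rightarrow> pt \<Rightarrow> bool" where
  "opposite_vertices T e p q \<longleftrightarrow> p \<noteq> q \<and> p \<notin> e \<and> q \<notin> e \<and>
     insert p e \<in> T \<and> insert q e \<in> T"

definition flippable :: "pt set \<Rightarrow> pt set set \<Rightarrow> pt set \<Rightarrow> bool" where
  "flippable P T e \<longleftrightarrow> e \<in> edges_of T \<and> \<not> hull_edge P e \<and>
     (\<exists>p q. opposite_vertices T e p q \<and>
        convex (convex hull (insert p e) \<union> convex hull (insert q e)))"

definition good_edge :: "pt set \<Rightarrow> pt set set \<Rightarrow> real \<Rightarrow> pt set \<Rightarrow> bool" where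
  "good_edge P T c e \<longleftrightarrow> crosses c e \<and> flippable P T e \<and>
     (\<forall>p q. opposite_vertices T e p q \<longrightarrow> (fst p < c) \<noteq> (fst q < c))"

definition region :: "real \<Rightarrow> pt set \<Rightarrow> pt set \<Rightarrow> pt set" where
  "region c e e' = convex hull ((e \<inter> e') \<union> ((convex hull e \<union> convex hull e') \<inter> vline c))"

definition is_T_path :: "pt set \<Rightarrow> pt set set \<Rightarrow> real \<Rightarrow> pt set list \<Rightarrow> bool" where
  "is_T_path P T c \<pi> \<longleftrightarrow> \<pi> \<noteq> [] \<and> distinct \<pi> \<and>
     (\<forall>e\<in>set \<pi>. e \<in> edges_of T \<and> crosses c e) \<and>
     hull_edge P (hd \<pi>) \<and> hull_edge P (last \<pi>) \<and> hd \<pi> \<noteq> last \<pi> \<and>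
     (\<forall>i. Suc i < length \<pi> \<longrightarrow>
        card (\<pi> ! i \<inter> \<pi> ! Suc i) = 1 \<and>
        region c (\<pi> ! i) (\<pi> ! Suc i) \<inter> P \<subseteq> \<pi> ! i \<inter> \<pi> ! Suc i)"

end

theory Submission
  imports Defs
begin

text \<open>Every edge of \<open>T\<close> crossing the line \<open>l\<close> meets it in a single point, and distinct
  crossing edges meet it at distinct heights, because edges of a triangulation do not cross
  and \<open>P\<close> is in general position. Listing the crossing edges by height gives a T-path:
  two consecutive ones are sides of the triangle containing the piece of \<open>l\<close> between them,
  so they share a vertex and bound an empty region, and the lowest and the highest lie on
  the hull.

  Conversely, let \<open>e\<close> be good and \<open>\<pi>\<close> any T-path. Its first and last edges are hull
  edges, so they bracket the crossing point of \<open>e\<close>, which is interior to the hull; hence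
  two consecutive edges \<open>vw\<close>, \<open>vw'\<close> of \<open>\<pi>\<close> bracket it. If \<open>e\<close> is neither of them, the
  emptiness of the region between them forces \<open>e\<close> to end at \<open>v\<close>. The opposite vertex
  \<open>r\<close> of \<open>e\<close> on the side of \<open>v\<close> then spans, with the other endpoint of \<open>e\<close>, an edge
  that crosses \<open>l\<close> between \<open>vw\<close> and \<open>vw'\<close> as well, so \<open>r = v\<close>, which is absurd.\<close>

section \<open>Sign patterns of real numbers\<close>

lemma aligned_factors_nonneg:
  fixes A B p q :: real
  assumes "0 \<le> A * p" "0 \<le> B * q" "0 < A * (p + q)" "0 < B * (p + q)"
  shows "0 \<le> p * q"
proof -
  consider "0 < A" "0 < B" | "A < 0" "B < 0"
    using assms(3,4) by (auto simp: zero_less_mult_iff)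
  then show ?thesis
  proof cases
    case 1
    then show ?thesis using assms(1,2) by (simp add: zero_le_mult_iff)
  next
    case 2
    then have "p \<le> 0" "q \<le> 0" using assms(1,2) by (auto simp: zero_le_mult_iff)
    then show ?thesis by (simp add: mult_nonpos_nonpos)
  qed
qed

lemma aligned_factor_pos:
  fixes A p q :: real
  assumes "0 < p * q" "0 < A * (p + q)"
  shows "0 < A * p"
proof -
  consider "0 < p" "0 < q" | "p < 0" "q < 0" using assms(1) by (auto simp: zero_less_mult_iff)
  then show ?thesis
  proof cases
    case 1
    then show ?thesis using assms(2) by (simp add: zero_less_mult_iff)
  next
    case 2
    then show ?thesis using assms(2) by (simp add: zero_less_mult_iff)
  qed
qed

lemma nearer_strictly_between:
  fixes Y0 Y1 Y2 :: real
  assumes "0 < (Y1 - Y0) * (Y2 - Y0)" "Y1 \<noteq> Y2"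
  shows "(Y1 - Y0) * (Y1 - Y2) < 0 \<or> (Y2 - Y0) * (Y2 - Y1) < 0"
proof -
  have "Y0 < Y1 \<and> Y0 < Y2 \<or> Y1 < Y0 \<and> Y2 < Y0" using assms(1) by (auto simp: zero_less_mult_iff)
  then have "Y0 < Y1 \<and> Y1 < Y2 \<or> Y2 < Y1 \<and> Y1 < Y0 \<or> Y0 < Y2 \<and> Y2 < Y1 \<or> Y1 < Y2 \<and> Y2 < Y0"
    using assms(2) by linarith
  then show ?thesis by (auto simp: mult_less_0_iff)
qed

lemma between_if_no_point_between:
  fixes Yf Yg Y0 Y' :: real
  assumes "(Yf - Y0) * (Yg - Y0) < 0" "\<not> (Yf - Y0) * (Yf - Y') < 0" "\<not> (Yg - Y0) * (Yg - Y') < 0"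
    "Yf \<noteq> Y'" "Yg \<noteq> Y'" "Y0 \<noteq> Y'"
  shows "(Y' - Yf) * (Y' - Yg) < 0"
proof -
  have "Yf < Y0 \<and> Y0 < Yg \<or> Yg < Y0 \<and> Y0 < Yf" using assms(1) by (auto simp: mult_less_0_iff)
  moreover have "\<not> (Y0 < Yf \<and> Yf < Y' \<or> Y' < Yf \<and> Yf < Y0)"
    using assms(2) by (auto simp: mult_less_0_iff)
  moreover have "\<not> (Y0 < Yg \<and> Yg < Y' \<or> Y' < Yg \<and> Yg < Y0)"
    using assms(3) by (auto simp: mult_less_0_iff)
  ultimately have "Yf < Y' \<and> Y' < Yg \<or> Yg < Y' \<and> Y' < Yf"
    using assms(4,5,6) by linarith
  then show ?thesis by (auto simp: mult_less_0_iff)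
qed

lemma discrete_sign_change:
  fixes f :: "nat \<Rightarrow> real"
  assumes "(f 0 - y) * (f (Suc n) - y) \<le> 0"
  shows "\<exists>i\<le>n. (f i - y) * (f (Suc i) - y) \<le> 0"
  using assms
proof (induction n)
  case 0
  then show ?case by auto
next
  case (Suc n)
  show ?case
  proof (cases "(f (Suc n) - y) * (f (Suc (Suc n)) - y) \<le> 0")
    case True
    then show ?thesis by auto
  next
    case False
    then have "(f 0 - y) * (f (Suc n) - y) \<le> 0"
      using Suc.prems by (auto simp: mult_le_0_iff zero_less_mult_iff not_le)
    then show ?thesis using Suc.IH le_SucI by blast
  qed
qed

lemma bracketing_pairs_eq:
  fixes Y1 Y2 Yw Yd y :: real
  assumes "Y1 < y" "y < Y2" "(y - Yw) * (y - Yd) < 0"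
    "\<not> (Y1 < Yw \<and> Yw < Y2)" "\<not> (Y1 < Yd \<and> Yd < Y2)"
    "\<not> (Y1 - Yw) * (Y1 - Yd) < 0" "\<not> (Y2 - Yw) * (Y2 - Yd) < 0"
  shows "(Yw = Y1 \<and> Yd = Y2) \<or> (Yw = Y2 \<and> Yd = Y1)"
proof -
  have "Yw < y \<and> y < Yd \<or> Yd < y \<and> y < Yw" using assms(3) by (auto simp: mult_less_0_iff)
  moreover have "\<not> (Yw < Y1 \<and> Y1 < Yd \<or> Yd < Y1 \<and> Y1 < Yw)"
    using assms(6) by (auto simp: mult_less_0_iff)
  moreover have "\<not> (Yw < Y2 \<and> Y2 < Yd \<or> Yd < Y2 \<and> Y2 < Yw)"
    using assms(7) by (auto simp: mult_less_0_iff)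
  ultimately show ?thesis using assms(1,2,4,5) by linarith
qed

section \<open>Orientation and affine combinations\<close>

definition orient :: "pt \<Rightarrow> pt \<Rightarrow> pt \<Rightarrow> real" where
  "orient a b z = (fst b - fst a) * (snd z - snd a) - (snd b - snd a) * (fst z - fst a)"

definition cross2 :: "pt \<Rightarrow> pt \<Rightarrow> real" where
  "cross2 r s = fst r * snd s - snd r * fst s"

definition lerp :: "pt \<Rightarrow> pt \<Rightarrow> real \<Rightarrow> pt" where
  "lerp a b s = (fst a + s * (fst b - fst a), snd a + s * (snd b - snd a))"

lemma lerp_eq: "lerp a b s = (1 - s) *\<^sub>R a + s *\<^sub>R b"
  by (simp add: lerp_def prod_eq_iff algebra_simps)

lemma lerp_0 [simp]: "lerp a b 0 = a"
  by (simp add: lerp_def)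

lemma lerp_lerp_left: "lerp a (lerp a b s) t = lerp a b (t * s)"
  by (simp add: lerp_def algebra_simps)

lemma lerp_lerp_right: "lerp (lerp a b s) a m = lerp a b ((1 - m) * s)"
  by (simp add: lerp_def algebra_simps)

lemma lerp_add_scaleR: "lerp a b s + k *\<^sub>R (b - a) = lerp a b (s + k)"
  by (simp add: lerp_def prod_eq_iff algebra_simps)

lemma orient_degenerate [simp]: "orient a b a = 0" "orient a b b = 0"
  by (simp_all add: orient_def)

lemma orient_rotate: "orient b c a = orient a b c"
  by (simp add: orient_def algebra_simps)

lemma orient_swap: "orient a c b = - orient a b c"
  by (simp add: orient_def algebra_simps)

lemma orient_lerp: "orient p q (lerp a b s) = (1 - s) * orient p q a + s * orient p q b"
  by (simp add: orient_def lerp_def algebra_simps)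

lemma orient_add_scaleR: "orient p q (z + e *\<^sub>R r) = orient p q z + e * cross2 (q - p) r"
  by (simp add: orient_def cross2_def algebra_simps)

lemma lerp_in_hull2: "0 \<le> s \<Longrightarrow> s \<le> 1 \<Longrightarrow> lerp a b s \<in> convex hull {a, b}"
  unfolding segment_convex_hull[symmetric] in_segment lerp_eq by blast

lemma hull2_lerpE:
  assumes "x \<in> convex hull {a, b}"
  obtains s where "0 \<le> s" "s \<le> 1" "x = lerp a b s"
  using assms unfolding segment_convex_hull[symmetric] in_segment lerp_eq by blast

lemma lerp_if_orient_eq_0:
  assumes "orient a b x = 0" "a \<noteq> b"
  obtains s where "x = lerp a b s"
proof (cases "fst b = fst a")
  case True
  then have "snd b \<noteq> snd a" using assms(2) by (simp add: prod_eq_iff)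
  moreover have "fst x = fst a" using assms(1) True \<open>snd b \<noteq> snd a\<close> by (simp add: orient_def)
  ultimately show ?thesis using True
    by (intro that[of "(snd x - snd a) / (snd b - snd a)"]) (simp add: lerp_def prod_eq_iff)
next
  case False
  define s where "s = (fst x - fst a) / (fst b - fst a)"
  have "snd x = snd a + s * (snd b - snd a)"
    using assms(1) False unfolding orient_def s_def by (simp add: field_simps)
  then show ?thesis using False by (intro that[of s]) (simp add: lerp_def s_def prod_eq_iff)
qed

lemma collinear_if_orient_eq_0:
  assumes "orient a b x = 0" "a \<noteq> b"
  shows "collinear {a, b, x}"
proof -
  obtain s where "x = lerp a b s" using lerp_if_orient_eq_0[OF assms] .
  then have "\<forall>y\<in>{a, b, x}. \<exists>k. y = a + k *\<^sub>R (b - a)"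
    by (auto intro: exI[of _ 0] exI[of _ 1] exI[of _ s] simp: lerp_eq algebra_simps)
  then show ?thesis unfolding collinear_alt by blast
qed

lemma general_position_orient_nonzero:
  assumes "general_position P" "a \<in> P" "b \<in> P" "x \<in> P" "a \<noteq> b" "a \<noteq> x" "b \<noteq> x"
  shows "orient a b x \<noteq> 0"
  using assms collinear_if_orient_eq_0 unfolding general_position_def by blast

lemma general_position_lerp_notin:
  assumes "general_position P" "a \<in> P" "b \<in> P" "a \<noteq> b" "0 < s" "s < 1"
  shows "lerp a b s \<notin> P"
proof
  assume x: "lerp a b s \<in> P"
  have "a - b \<noteq> 0" using assms(4) by simp
  then have "lerp a b s \<noteq> a" "lerp a b s \<noteq> b"
    using assms(5,6) by (auto simp: lerp_eq algebra_simps scaleR_right_diff_distrib[symmetric])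
  moreover have "orient a b (lerp a b s) = 0" by (simp add: orient_lerp)
  ultimately show False using general_position_orient_nonzero[OF assms(1-3) x assms(4)] by auto
qed

section \<open>Triangles\<close>

definition strictly_inside :: "pt \<Rightarrow> pt \<Rightarrow> pt \<Rightarrow> pt \<Rightarrow> bool" where
  "strictly_inside u w d z \<longleftrightarrow> orient u w d * orient u w z > 0 \<and> orient u w d * orient w d z > 0
     \<and> orient u w d * orient d u z > 0"

lemma orient_signs_if_in_hull3:
  assumes "z \<in> convex hull {u, w, d}"
  shows "orient u w d * orient u w z \<ge> 0 \<and> orient u w d * orient w d z \<ge> 0
     \<and> orient u w d * orient d u z \<ge> 0"
proof -
  obtain a b g where abg: "0 \<le> a" "0 \<le> b" "0 \<le> g" "a + b + g = 1"
    "z = a *\<^sub>R u + b *\<^sub>R w + g *\<^sub>R d"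
    using assms unfolding convex_hull_3 by blast
  have a: "a = 1 - b - g" using abg by simp
  have "orient u w z = g * orient u w d" "orient w d z = a * orient u w d"
       "orient d u z = b * orient u w d"
    unfolding orient_def abg(5) a by (simp_all add: algebra_simps)
  then show ?thesis using abg(1-3) by (simp add: mult.left_commute[of "orient u w d"])
qed

text \<open>The converse, via barycentric coordinates (orientations divided by that of the triangle).\<close>

lemma in_hull3_if_orient_signs:
  assumes "orient u w d \<noteq> 0" "orient u w d * orient u w z \<ge> 0" "orient u w d * orient w d z \<ge> 0"
     "orient u w d * orient d u z \<ge> 0"
  shows "z \<in> convex hull {u, w, d}"
proof -
  define D where "D = orient u w d"
  define a where "a = orient w d z / D"
  define b where "b = orient d u z / D"
  define g where "g = orient u w z / D"
  have D: "D \<noteq> 0" using assms D_def by simp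
  have nn: "0 \<le> a" "0 \<le> b" "0 \<le> g"
    using assms unfolding a_def b_def g_def D_def by (auto simp: zero_le_divide_iff zero_le_mult_iff)
  have "orient w d z + orient d u z + orient u w z = D"
    unfolding D_def orient_def by (simp add: algebra_simps)
  then have s: "a + b + g = 1" using D unfolding a_def b_def g_def
    by (simp add: add_divide_distrib[symmetric])
  have "orient w d z * fst u + orient d u z * fst w + orient u w z * fst d = D * fst z"
       "orient w d z * snd u + orient d u z * snd w + orient u w z * snd d = D * snd z"
    unfolding D_def orient_def by (simp_all add: algebra_simps)
  then have "z = a *\<^sub>R u + b *\<^sub>R w + g *\<^sub>R d"
    using D unfolding a_def b_def g_def by (simp add: prod_eq_iff field_simps)
  then show ?thesis unfolding convex_hull_3 using nn s by blast
qed

lemma strictly_inside_interior: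
  assumes "strictly_inside u w d z"
  shows "z \<in> interior (convex hull {u, w, d})"
proof -
  define D where "D = orient u w d"
  let ?S = "{z. 0 < D * orient u w z} \<inter> {z. 0 < D * orient w d z} \<inter> {z. 0 < D * orient d u z}"
  have "\<And>p q. continuous_on UNIV (\<lambda>z. D * orient p q z)"
    unfolding orient_def by (intro continuous_intros)
  then have "open ?S"
    by (intro open_Int open_Collect_less continuous_on_const)
  moreover have "?S \<subseteq> convex hull {u, w, d}"
  proof
    fix y assume "y \<in> ?S"
    then show "y \<in> convex hull {u, w, d}"
      by (intro in_hull3_if_orient_signs) (auto simp: D_def)
  qed
  moreover have "z \<in> ?S" using assms unfolding strictly_inside_def D_def by auto
  ultimately show ?thesis using interior_maximal by blast
qed

lemma centroid_strictly_inside: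
  assumes "orient u w d \<noteq> 0"
  shows "strictly_inside u w d ((fst u + fst w + fst d) / 3, (snd u + snd w + snd d) / 3)"
proof -
  have "orient u w d * (orient u w d / 3) > 0"
    using assms by (auto simp: zero_less_mult_iff linorder_neq_iff)
  then show ?thesis unfolding strictly_inside_def orient_def by (simp add: field_simps)
qed

lemma lerp_not_strictly_inside:
  assumes "x \<in> {u, w, d}" "y \<in> {u, w, d}" "x \<noteq> y"
  shows "\<not> strictly_inside u w d (lerp x y s)"
  using assms by (auto simp: strictly_inside_def orient_lerp orient_rotate)

lemma eventually_strictly_inside_from_side:
  assumes D: "orient u w d \<noteq> 0" and s: "0 < s" "s < 1" and r: "orient u w d * cross2 (w - u) r > 0"
  shows "\<forall>\<^sub>F e in at_right 0. strictly_inside u w d (lerp u w s + e *\<^sub>R r)"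
proof -
  define D where "D = orient u w d"
  have DD: "D * D > 0" using assms(1) unfolding D_def by (auto simp: zero_less_mult_iff linorder_neq_iff)
  have o: "orient w d (lerp u w s) = (1 - s) * D" "orient d u (lerp u w s) = s * D"
    unfolding D_def by (simp_all add: orient_lerp orient_rotate)
  have "((\<lambda>e. (1 - s) * (D * D) + e * (D * cross2 (d - w) r))
      \<longlongrightarrow> (1 - s) * (D * D) + 0 * (D * cross2 (d - w) r)) (at_right 0)"
    "((\<lambda>e. s * (D * D) + e * (D * cross2 (u - d) r))
      \<longlongrightarrow> s * (D * D) + 0 * (D * cross2 (u - d) r)) (at_right 0)"
    by (intro tendsto_intros)+
  then have "\<forall>\<^sub>F e in at_right 0. (1 - s) * (D * D) + e * (D * cross2 (d - w) r) > 0"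
    "\<forall>\<^sub>F e in at_right 0. s * (D * D) + e * (D * cross2 (u - d) r) > 0"
    using DD s by (auto intro: order_tendstoD(1))
  moreover have "\<forall>\<^sub>F e in at_right 0. e > (0::real)" by (rule eventually_at_right_less)
  ultimately show ?thesis
  proof eventually_elim
    case (elim e)
    have eqs: "D * orient u w (lerp u w s + e *\<^sub>R r) = e * (D * cross2 (w - u) r)"
      "D * orient w d (lerp u w s + e *\<^sub>R r) = (1 - s) * (D * D) + e * (D * cross2 (d - w) r)"
      "D * orient d u (lerp u w s + e *\<^sub>R r) = s * (D * D) + e * (D * cross2 (u - d) r)"
      unfolding orient_add_scaleR o by (simp_all add: orient_lerp algebra_simps)
    have "0 < e * (D * cross2 (w - u) r)" using elim r D_def by simp
    then show ?case using elim unfolding strictly_inside_def D_def[symmetric] eqs by blast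
  qed
qed

lemma triangulationD:
  assumes "triangulation P T" "t \<in> T"
  shows "t \<subseteq> P" "card t = 3" "\<not> collinear t" "convex hull t \<inter> P = t" "finite t"
  using assms unfolding triangulation_def by (auto intro: card_ge_0_finite)

lemma orient_triangle_nonzero:
  assumes "\<not> collinear {u, w, d}" "u \<noteq> w"
  shows "orient u w d \<noteq> 0"
  using collinear_if_orient_eq_0[of u w d] assms by auto

lemma triangle_third_vertex:
  assumes "triangulation P T" "t \<in> T" "a \<in> t" "b \<in> t" "a \<noteq> b"
  obtains d where "t = {a, b, d}" "orient a b d \<noteq> 0"
proof -
  have "\<not> t \<subseteq> {a, b}"
  proof
    assume "t \<subseteq> {a, b}"
    then have "card t \<le> card {a, b}" by (intro card_mono) auto
    then show False using triangulationD(2)[OF assms(1,2)] assms(5) by simp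
  qed
  then obtain d where d: "d \<in> t" "d \<noteq> a" "d \<noteq> b" by blast
  have "{a, b, d} \<subseteq> t" "card {a, b, d} = 3" using assms d by auto
  then have t: "t = {a, b, d}" using triangulationD(2,5)[OF assms(1,2)] by (metis card_subset_eq)
  show ?thesis
    using that[OF t] orient_triangle_nonzero[of a b d] triangulationD(3)[OF assms(1,2)] t assms(5)
    by auto
qed

lemma triangle_interior_nonempty:
  assumes "triangulation P T" "t \<in> T"
  shows "interior (convex hull t) \<noteq> {}"
proof -
  obtain u w d where t: "t = {u, w, d}" "u \<noteq> w"
    using triangulationD(2)[OF assms] card_3_iff by metis
  then have "orient u w d \<noteq> 0"
    using orient_triangle_nonzero triangulationD(3)[OF assms] by simp
  then show ?thesis using strictly_inside_interior[OF centroid_strictly_inside] t by blast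
qed

lemma strictly_inside_unique_triangle:
  assumes "triangulation P T" "t \<in> T" "t' \<in> T" "t = {u, w, d}" "strictly_inside u w d z"
    "z \<in> convex hull t'"
  shows "t = t'"
proof (rule ccontr)
  assume "t \<noteq> t'"
  have "closure (interior (convex hull t')) = convex hull t'"
    using convex_closure_interior[OF convex_convex_hull triangle_interior_nonempty[OF assms(1,3)]]
      triangulationD(5)[OF assms(1,3)]
    by (simp add: closure_closed compact_imp_closed finite_imp_compact compact_convex_hull)
  then have "interior (convex hull t) \<inter> closure (interior (convex hull t')) \<noteq> {}"
    using strictly_inside_interior[OF assms(5)] assms(4,6) by auto
  then have "interior (convex hull t) \<inter> interior (convex hull t') \<noteq> {}"
    using open_Int_closure_eq_empty[OF open_interior] by blast
  then show False using assms(1,2,3) \<open>t \<noteq> t'\<close> unfolding triangulation_def by blast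
qed

lemma edges_ofE:
  assumes "{a, b} \<in> edges_of T"
  obtains t where "t \<in> T" "a \<in> t" "b \<in> t"
proof -
  obtain x y t where "{a, b} = {x, y}" "t \<in> T" "x \<in> t" "y \<in> t"
    using assms unfolding edges_of_def by blast
  then show ?thesis using that by (metis doubleton_eq_iff)
qed

lemma edges_ofI: "t \<in> T \<Longrightarrow> x \<in> t \<Longrightarrow> y \<in> t \<Longrightarrow> x \<noteq> y \<Longrightarrow> {x, y} \<in> edges_of T"
  unfolding edges_of_def by blast

lemma edge_vertices_in_P:
  assumes "triangulation P T" "{a, b} \<in> edges_of T"
  shows "a \<in> P" "b \<in> P"
  using edges_ofE[OF assms(2)] triangulationD(1)[OF assms(1)] by blast+

text \<open>Edges of a triangulation of a point set in general position do not cross: if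
  the relative interiors of two edges meet, move from the common point into the triangle on one
  of them along the other; the points reached are strictly inside that triangle and on
  the second edge, so both edges belong to the same triangle.\<close>

lemma edges_eq_if_open_segments_meet:
  assumes tri: "triangulation P T" and gp: "general_position P"
    and f: "{a, b} \<in> edges_of T" and g: "{a', b'} \<in> edges_of T" and ne: "a \<noteq> b" "a' \<noteq> b'"
    and m: "lerp a b s = lerp a' b' s'" and s: "0 < s" "s < 1" "0 < s'" "s' < 1"
  shows "{a, b} = {a', b'}"
proof -
  obtain t where t: "t \<in> T" "a \<in> t" "b \<in> t" using edges_ofE[OF f] by blast
  obtain t' where t': "t' \<in> T" "a' \<in> t'" "b' \<in> t'" using edges_ofE[OF g] by blast
  obtain d where d: "t = {a, b, d}" "orient a b d \<noteq> 0" using triangle_third_vertex[OF tri t ne(1)] .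
  have P: "a \<in> P" "b \<in> P" "a' \<in> P" "b' \<in> P"
    using edge_vertices_in_P[OF tri f] edge_vertices_in_P[OF tri g] by auto
  have "orient a b (lerp a' b' s') = 0" unfolding m[symmetric] by (simp add: orient_lerp)
  then have on_ab: "(1 - s') * orient a b a' + s' * orient a b b' = 0" by (simp only: orient_lerp)
  have cr: "cross2 (b - a) (b' - a') = orient a b b' - orient a b a'"
    unfolding cross2_def orient_def by (simp add: algebra_simps)
  show ?thesis
  proof (cases "cross2 (b - a) (b' - a') = 0")
    case True
    then have "orient a b a' = 0" "orient a b b' = 0" using cr on_ab by (simp_all add: algebra_simps)
    then have "a' \<in> {a, b}" "b' \<in> {a, b}"
      using general_position_orient_nonzero[OF gp P(1,2)] P ne(1) by blast+
    then show ?thesis using ne by auto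
  next
    case False
    define \<sigma> :: real where "\<sigma> = (if orient a b d * cross2 (b - a) (b' - a') > 0 then 1 else -1)"
    have "cross2 (b - a) (\<sigma> *\<^sub>R (b' - a')) = \<sigma> * cross2 (b - a) (b' - a')"
      unfolding cross2_def by (simp add: algebra_simps)
    then have "orient a b d * cross2 (b - a) (\<sigma> *\<^sub>R (b' - a')) > 0"
      using False d(2) unfolding \<sigma>_def by (auto simp: zero_less_mult_iff linorder_neq_iff)
    then have "\<forall>\<^sub>F e in at_right 0. strictly_inside a b d (lerp a b s + e *\<^sub>R (\<sigma> *\<^sub>R (b' - a')))"
      by (rule eventually_strictly_inside_from_side[OF d(2) s(1,2)])
    moreover have "\<forall>\<^sub>F e in at_right 0. e \<in> {0<..<min s' (1 - s')}"
      using s(3,4) by (intro eventually_at_right_real) simp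
    ultimately obtain e where e: "strictly_inside a b d (lerp a b s + e *\<^sub>R (\<sigma> *\<^sub>R (b' - a')))"
      "0 < e" "e < s'" "e < 1 - s'"
      using eventually_happens'[OF trivial_limit_at_right_real eventually_conj] by fastforce
    have eq: "lerp a b s + e *\<^sub>R (\<sigma> *\<^sub>R (b' - a')) = lerp a' b' (s' + \<sigma> * e)"
      unfolding m by (simp add: lerp_add_scaleR[symmetric] mult.commute)
    have "0 \<le> s' + \<sigma> * e" "s' + \<sigma> * e \<le> 1" using e unfolding \<sigma>_def by auto
    then have "lerp a' b' (s' + \<sigma> * e) \<in> convex hull t'"
      using lerp_in_hull2 hull_mono[of "{a', b'}" t'] t' by blast
    then have "t = t'" using strictly_inside_unique_triangle[OF tri t(1) t'(1) d(1)] e(1) eq by simp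
    then have "a' \<in> {a, b, d}" "b' \<in> {a, b, d}" using t' d by auto
    then show ?thesis using lerp_not_strictly_inside e(1) eq ne(2) by metis
  qed
qed

section \<open>Crossing the vertical line\<close>

abbreviation straddles :: "real \<Rightarrow> pt \<Rightarrow> pt \<Rightarrow> bool" where
  "straddles c a b \<equiv> (fst a - c) * (fst b - c) < 0"

definition cross_param :: "real \<Rightarrow> pt \<Rightarrow> pt \<Rightarrow> real" where
  "cross_param c a b = (c - fst a) / (fst b - fst a)"

definition cross_height :: "real \<Rightarrow> pt set \<Rightarrow> real" where
  "cross_height c f = (THE y. (c, y) \<in> convex hull f)"

lemma straddles_sym: "straddles c a b \<Longrightarrow> straddles c b a"
  by (simp add: mult.commute)

lemma crosses_iff_straddles: "crosses c f \<longleftrightarrow> (\<exists>a b. f = {a, b} \<and> straddles c a b)"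
proof
  assume "crosses c f"
  then obtain a b where "f = {a, b}" "fst a < c" "c < fst b" unfolding crosses_def by blast
  then show "\<exists>a b. f = {a, b} \<and> straddles c a b"
    by (intro exI[of _ a] exI[of _ b]) (simp add: mult_neg_pos)
next
  assume "\<exists>a b. f = {a, b} \<and> straddles c a b"
  then obtain a b where f: "f = {a, b}" and ab: "straddles c a b" by blast
  then consider "fst a < c" "c < fst b" | "fst b < c" "c < fst a" by (auto simp: mult_less_0_iff)
  then show "crosses c f"
  proof cases
    case 1 then show ?thesis unfolding crosses_def f by blast
  next
    case 2 then show ?thesis unfolding crosses_def f by (metis insert_commute)
  qed
qed

lemma cross_param_bounds:
  assumes "straddles c a b" shows "0 < cross_param c a b" "cross_param c a b < 1"
proof -
  have "fst a < c \<and> c < fst b \<or> fst b < c \<and> c < fst a" using assms by (auto simp: mult_less_0_iff)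
  then show "0 < cross_param c a b" "cross_param c a b < 1" unfolding cross_param_def
    by (auto simp: divide_pos_pos divide_neg_neg divide_less_eq)
qed

lemma hull2_vline_point:
  assumes "straddles c a b" "x \<in> convex hull {a, b}" "fst x = c"
  shows "x = lerp a b (cross_param c a b)"
proof -
  obtain s where s: "x = lerp a b s" using hull2_lerpE[OF assms(2)] by blast
  have "fst a + s * (fst b - fst a) = c" using s assms(3) by (simp add: lerp_def)
  moreover have "fst b - fst a \<noteq> 0" using assms(1) by auto
  ultimately have "s = cross_param c a b" unfolding cross_param_def by (simp add: field_simps)
  then show ?thesis using s by simp
qed

lemma cross_point_eq:
  assumes "straddles c a b"
  shows "(c, cross_height c {a, b}) = lerp a b (cross_param c a b)"
proof -
  let ?p = "lerp a b (cross_param c a b)"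
  have "fst b - fst a \<noteq> 0" using assms by auto
  then have fst_p: "fst ?p = c" by (simp add: lerp_def cross_param_def)
  have "?p \<in> convex hull {a, b}"
    using cross_param_bounds[OF assms] by (intro lerp_in_hull2) auto
  moreover have "(c, snd ?p) = ?p" using fst_p by (simp add: prod_eq_iff)
  ultimately have "(c, snd ?p) \<in> convex hull {a, b}" by simp
  moreover have "y = snd ?p" if "(c, y) \<in> convex hull {a, b}" for y
    using arg_cong[OF hull2_vline_point[OF assms that], of snd] by simp
  ultimately have "cross_height c {a, b} = snd ?p"
    unfolding cross_height_def by (rule the_equality)
  then show ?thesis using fst_p by (simp add: prod_eq_iff)
qed

lemma cross_point_in_hull2:
  assumes "straddles c a b"
  shows "(c, cross_height c {a, b}) \<in> convex hull {a, b}"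
  unfolding cross_point_eq[OF assms] using cross_param_bounds[OF assms] by (intro lerp_in_hull2) auto

lemma hull2_Int_vline:
  assumes "straddles c a b"
  shows "convex hull {a, b} \<inter> vline c = {(c, cross_height c {a, b})}"
proof -
  have "convex hull {a, b} \<inter> vline c \<subseteq> {(c, cross_height c {a, b})}"
    using hull2_vline_point[OF assms] cross_point_eq[OF assms] by (auto simp: vline_def)
  then show ?thesis using cross_point_in_hull2[OF assms] by (auto simp: vline_def)
qed

lemma orient_vline:
  assumes "straddles c a b"
  shows "orient a b (c, y) = (fst b - fst a) * (y - cross_height c {a, b})"
proof -
  have "cross_height c {a, b} = snd a + cross_param c a b * (snd b - snd a)"
    using arg_cong[OF cross_point_eq[OF assms], of snd] by (simp add: lerp_def)
  moreover have "fst b - fst a \<noteq> 0" using assms by auto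
  ultimately show ?thesis unfolding orient_def cross_param_def by (simp add: field_simps)
qed

lemma hull_same_side:
  fixes S :: "pt set"
  assumes "\<forall>x\<in>S. k * (fst x - c) > 0" "z \<in> convex hull S"
  shows "k * (fst z - c) > 0"
proof -
  have "{z::pt. k * (fst z - c) > 0} = {z. inner (k, 0) z > k * c}"
    by (auto simp: algebra_simps inner_Pair_0)
  then have "convex {z::pt. k * (fst z - c) > 0}" by (simp add: convex_halfspace_gt)
  then have "convex hull S \<subseteq> {z::pt. k * (fst z - c) > 0}"
    using assms(1) by (intro hull_minimal) auto
  then show ?thesis using assms(2) by auto
qed

lemma hull_same_closed_side:
  fixes S :: "pt set"
  assumes "\<forall>x\<in>S. k * (fst x - c) \<ge> 0" "z \<in> convex hull S"
  shows "k * (fst z - c) \<ge> 0"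
proof -
  have "{z::pt. k * (fst z - c) \<ge> 0} = {z. inner (k, 0) z \<ge> k * c}"
    by (auto simp: algebra_simps inner_Pair_0)
  then have "convex {z::pt. k * (fst z - c) \<ge> 0}" by (simp add: convex_halfspace_ge)
  then have "convex hull S \<subseteq> {z::pt. k * (fst z - c) \<ge> 0}"
    using assms(1) by (intro hull_minimal) auto
  then show ?thesis using assms(2) by auto
qed

lemma straddling_edge_at_endpointE:
  assumes "f = {x, y}" "straddles c x y" "v \<in> f"
  obtains w where "f = {v, w}" "straddles c v w"
proof (cases "v = x")
  case True then show ?thesis using assms that by blast
next
  case False then have "v = y" using assms by auto
  then show ?thesis using assms straddles_sym[OF assms(2)] that by (metis insert_commute)
qed

lemma region_eq_triangle:
  assumes "straddles c v w" "straddles c v w'" "{v, w} \<inter> {v, w'} = {v}"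
  shows "region c {v, w} {v, w'} = convex hull {v, (c, cross_height c {v, w}), (c, cross_height c {v, w'})}"
proof -
  have "(convex hull {v, w} \<union> convex hull {v, w'}) \<inter> vline c
      = (convex hull {v, w} \<inter> vline c) \<union> (convex hull {v, w'} \<inter> vline c)" by blast
  also have "\<dots> = {(c, cross_height c {v, w}), (c, cross_height c {v, w'})}"
    unfolding hull2_Int_vline[OF assms(1)] hull2_Int_vline[OF assms(2)] by auto
  finally show ?thesis unfolding region_def assms(3) by (simp add: insert_commute)
qed

text \<open>A triangle whose apex \<open>u\<close> is alone on its side of the line: the line meets it in
  the segment between the crossings of the sides \<open>uw\<close> and \<open>ud\<close>.\<close>

locale straddling_triangle =
  fixes c :: real and u w d :: pt
  assumes nondegenerate: "orient u w d \<noteq> 0"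
    and straddles_uw: "straddles c u w" and straddles_ud: "straddles c u d"
begin

abbreviation "Yw \<equiv> cross_height c {u, w}"
abbreviation "Yd \<equiv> cross_height c {u, d}"

lemma orient_uw_vline: "orient u w (c, y) = (fst w - fst u) * (y - Yw)"
  by (rule orient_vline[OF straddles_uw])

lemma orient_du_vline: "orient d u (c, y) = (fst d - fst u) * (Yd - y)"
  using orient_vline[OF straddles_ud, of y] by (simp add: orient_def algebra_simps)

lemma square_pos: "orient u w d * orient u w d > 0"
  using nondegenerate by (auto simp: zero_less_mult_iff linorder_neq_iff)

lemma crossing_uw_sign: "orient u w d * (fst w - fst u) * (Yd - Yw) > 0"
proof -
  have "orient u w (c, Yd) = cross_param c u d * orient u w d"
    unfolding cross_point_eq[OF straddles_ud] by (simp add: orient_lerp)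
  then have "(fst w - fst u) * (Yd - Yw) = cross_param c u d * orient u w d"
    unfolding orient_uw_vline .
  then have "orient u w d * (fst w - fst u) * (Yd - Yw)
      = cross_param c u d * (orient u w d * orient u w d)"
    by (metis mult.assoc mult.left_commute)
  moreover have "0 < cross_param c u d * (orient u w d * orient u w d)"
    using cross_param_bounds[OF straddles_ud] square_pos by simp
  ultimately show ?thesis by linarith
qed

lemma crossing_ud_sign: "orient u w d * (fst d - fst u) * (Yd - Yw) > 0"
proof -
  have "orient d u (c, Yw) = cross_param c u w * orient u w d"
    unfolding cross_point_eq[OF straddles_uw] by (simp add: orient_lerp orient_rotate)
  then have "(fst d - fst u) * (Yd - Yw) = cross_param c u w * orient u w d"
    unfolding orient_du_vline .
  then have "orient u w d * (fst d - fst u) * (Yd - Yw)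
      = cross_param c u w * (orient u w d * orient u w d)"
    by (metis mult.assoc mult.left_commute)
  moreover have "0 < cross_param c u w * (orient u w d * orient u w d)"
    using cross_param_bounds[OF straddles_uw] square_pos by simp
  ultimately show ?thesis by linarith
qed

lemma crossings_distinct: "Yw \<noteq> Yd"
  using crossing_uw_sign by auto

lemma vline_hull_between:
  assumes "(c, y) \<in> convex hull {u, w, d}"
  shows "(y - Yw) * (y - Yd) \<le> 0"
proof -
  define D where "D = orient u w d"
  have "0 \<le> (D * (fst w - fst u)) * (y - Yw)" "0 \<le> (D * (fst d - fst u)) * (Yd - y)"
    using orient_signs_if_in_hull3[OF assms] unfolding orient_uw_vline orient_du_vline D_def
    by (simp_all add: mult.assoc)
  moreover have "0 < (D * (fst w - fst u)) * ((y - Yw) + (Yd - y))"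
    "0 < (D * (fst d - fst u)) * ((y - Yw) + (Yd - y))"
    using crossing_uw_sign crossing_ud_sign unfolding D_def by simp_all
  ultimately have "0 \<le> (y - Yw) * (Yd - y)" by (rule aligned_factors_nonneg)
  then show ?thesis by (simp add: algebra_simps)
qed

lemma orient_wd_between:
  assumes "(y - Yw) * (y - Yd) < 0"
  shows "orient u w d * orient w d (c, y) > 0"
proof -
  define D where "D = orient u w d"
  define \<mu> where "\<mu> = (y - Yw) / (Yd - Yw)"
  have "Yw < y \<and> y < Yd \<or> Yd < y \<and> y < Yw" using assms by (auto simp: mult_less_0_iff)
  then have \<mu>: "0 < \<mu>" "\<mu> < 1" unfolding \<mu>_def by (auto simp: divide_less_eq zero_less_divide_iff)
  have "(c, y) = lerp (c, Yw) (c, Yd) \<mu>"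
    using crossings_distinct unfolding \<mu>_def lerp_def by simp
  then have split: "orient w d (c, y) = (1 - \<mu>) * orient w d (c, Yw) + \<mu> * orient w d (c, Yd)"
    by (simp add: orient_lerp)
  have ends: "orient w d (c, Yw) = (1 - cross_param c u w) * D"
    "orient w d (c, Yd) = (1 - cross_param c u d) * D"
    unfolding cross_point_eq[OF straddles_uw] cross_point_eq[OF straddles_ud] D_def
    by (simp_all add: orient_lerp orient_rotate)
  define K where "K = (1 - \<mu>) * (1 - cross_param c u w) + \<mu> * (1 - cross_param c u d)"
  have "D * orient w d (c, y) = K * (D * D)"
    unfolding split ends K_def by (simp add: algebra_simps)
  moreover have "K > 0"
    using \<mu> cross_param_bounds[OF straddles_uw] cross_param_bounds[OF straddles_ud]
    unfolding K_def by (simp add: add_pos_pos)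
  then have "K * (D * D) > 0" using square_pos unfolding D_def by simp
  ultimately show ?thesis unfolding D_def by linarith
qed

lemma strictly_inside_between:
  assumes "(y - Yw) * (y - Yd) < 0"
  shows "strictly_inside u w d (c, y)"
proof -
  define D where "D = orient u w d"
  have "(y - Yw) * (Yd - y) = - ((y - Yw) * (y - Yd))" by (simp add: algebra_simps)
  then have pq: "0 < (y - Yw) * (Yd - y)" using assms by linarith
  have sum: "(y - Yw) + (Yd - y) = Yd - Yw" "(Yd - y) + (y - Yw) = Yd - Yw" by simp_all
  have "0 < (D * (fst w - fst u)) * ((y - Yw) + (Yd - y))"
    unfolding sum D_def by (rule crossing_uw_sign)
  with pq have uw: "0 < (D * (fst w - fst u)) * (y - Yw)" by (rule aligned_factor_pos)
  have "0 < (Yd - y) * (y - Yw)" using pq by (simp only: mult.commute)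
  moreover have "0 < (D * (fst d - fst u)) * ((Yd - y) + (y - Yw))"
    unfolding sum D_def by (rule crossing_ud_sign)
  ultimately have "0 < (D * (fst d - fst u)) * (Yd - y)" by (rule aligned_factor_pos)
  with uw have "D * orient u w (c, y) > 0" "D * orient d u (c, y) > 0"
    unfolding orient_uw_vline orient_du_vline by (simp_all add: mult.assoc)
  then show ?thesis using orient_wd_between[OF assms] unfolding strictly_inside_def D_def by simp
qed

end

section \<open>Edges of the triangulation crossing the line\<close>

locale separated_triangulation =
  fixes P :: "pt set" and T :: "pt set set" and c :: real
  assumes finite_P: "finite P" and general_position: "general_position P"
    and triangulation: "triangulation P T" and separating: "separating_vline P c"
begin

lemma off_line: "x \<in> P \<Longrightarrow> fst x \<noteq> c"
  using separating unfolding separating_vline_def vline_def by auto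

lemma straddling_triangleI:
  assumes "{u, w, d} \<in> T" "straddles c u w" "straddles c u d"
  shows "straddling_triangle c u w d"
proof
  have "u \<noteq> w" using assms(2) by auto
  then show "orient u w d \<noteq> 0"
    using orient_triangle_nonzero triangulationD(3)[OF triangulation assms(1)] by blast
qed (use assms in auto)

text \<open>The three vertices cannot all lie on one side of the line.\<close>

lemma triangle_meeting_vline_apexE:
  assumes "t \<in> T" "(c, y) \<in> convex hull t"
  obtains u w d where "t = {u, w, d}" "straddling_triangle c u w d"
proof -
  obtain x1 x2 x3 where t: "t = {x1, x2, x3}"
    using triangulationD(2)[OF triangulation assms(1)] card_3_iff by metis
  have "x1 \<in> P" "x2 \<in> P" "x3 \<in> P" using triangulationD(1)[OF triangulation assms(1)] t by auto
  then have nz: "fst x1 - c \<noteq> 0" "fst x2 - c \<noteq> 0" "fst x3 - c \<noteq> 0" using off_line by auto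
  have "\<not> (\<forall>x\<in>t. (fst x1 - c) * (fst x - c) > 0)"
    using hull_same_side[of t "fst x1 - c" c "(c, y)"] assms(2) by auto
  then consider "straddles c x1 x2" "straddles c x1 x3" | "straddles c x2 x1" "straddles c x2 x3"
    | "straddles c x3 x1" "straddles c x3 x2"
    using nz unfolding t by (auto simp: zero_less_mult_iff mult_less_0_iff linorder_neq_iff)
  then show ?thesis
  proof cases
    case 1
    then show ?thesis using that[OF t] straddling_triangleI assms(1) t by blast
  next
    case 2
    then show ?thesis using that[of x2 x1 x3] straddling_triangleI[of x2 x1 x3] assms(1) t
      by (auto simp: insert_commute)
  next
    case 3
    then show ?thesis using that[of x3 x1 x2] straddling_triangleI[of x3 x1 x2] assms(1) t
      by (auto simp: insert_commute)
  qed
qed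

lemma cross_height_inj:
  assumes "{a, b} \<in> edges_of T" "{a', b'} \<in> edges_of T" "straddles c a b" "straddles c a' b'"
    "cross_height c {a, b} = cross_height c {a', b'}"
  shows "{a, b} = {a', b'}"
proof -
  have "lerp a b (cross_param c a b) = lerp a' b' (cross_param c a' b')"
    using cross_point_eq[OF assms(3)] cross_point_eq[OF assms(4)] assms(5) by simp
  moreover have "a \<noteq> b" "a' \<noteq> b'" using assms(3,4) by auto
  ultimately show ?thesis
    using edges_eq_if_open_segments_meet[OF triangulation general_position assms(1,2)]
      cross_param_bounds[OF assms(3)] cross_param_bounds[OF assms(4)] by blast
qed

lemma no_edge_crosses_inside:
  assumes "{u, w, d} \<in> T" "straddling_triangle c u w d"
    "{a, b} \<in> edges_of T" "straddles c a b"
  shows "\<not> (cross_height c {a, b} - cross_height c {u, w}) * (cross_height c {a, b} - cross_height c {u, d}) < 0"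
proof
  let ?y = "cross_height c {a, b}"
  assume "(?y - cross_height c {u, w}) * (?y - cross_height c {u, d}) < 0"
  then have inside: "strictly_inside u w d (c, ?y)"
    by (rule straddling_triangle.strictly_inside_between[OF assms(2)])
  obtain t' where t': "t' \<in> T" "a \<in> t'" "b \<in> t'" using edges_ofE[OF assms(3)] by blast
  have "(c, ?y) \<in> convex hull t'"
    using cross_point_in_hull2[OF assms(4)] hull_mono[of "{a, b}" t'] t' by blast
  then have "{u, w, d} = t'"
    using strictly_inside_unique_triangle[OF triangulation assms(1) t'(1) refl inside] by simp
  then have "a \<in> {u, w, d}" "b \<in> {u, w, d}" "a \<noteq> b" using t' assms(4) by auto
  then show False
    using lerp_not_strictly_inside[of a u w d b "cross_param c a b"] inside cross_point_eq[OF assms(4)]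
    by simp
qed

definition crossing_edges :: "pt set set" where
  "crossing_edges = {f \<in> edges_of T. crosses c f}"

lemma crossing_edgesE:
  assumes "f \<in> crossing_edges"
  obtains a b where "f = {a, b}" "straddles c a b" "{a, b} \<in> edges_of T"
  using assms unfolding crossing_edges_def crosses_iff_straddles by blast

lemma crossing_edgesI: "{a, b} \<in> edges_of T \<Longrightarrow> straddles c a b \<Longrightarrow> {a, b} \<in> crossing_edges"
  unfolding crossing_edges_def crosses_iff_straddles by blast

lemma finite_crossing_edges: "finite crossing_edges"
proof -
  have "crossing_edges \<subseteq> Pow P"
  proof
    fix f assume "f \<in> crossing_edges"
    then obtain a b where "f = {a, b}" "{a, b} \<in> edges_of T" by (rule crossing_edgesE)
    then show "f \<in> Pow P" using edge_vertices_in_P[OF triangulation] by auto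
  qed
  then show ?thesis using finite_P by (meson finite_Pow_iff finite_subset)
qed

lemma inj_on_cross_height: "inj_on (cross_height c) crossing_edges"
proof (rule inj_onI)
  fix f g assume "f \<in> crossing_edges" "g \<in> crossing_edges" "cross_height c f = cross_height c g"
  then show "f = g" by (elim crossing_edgesE) (metis cross_height_inj)
qed

lemma crossing_point_in_hull:
  assumes "f \<in> crossing_edges"
  shows "(c, cross_height c f) \<in> convex hull P"
proof -
  obtain a b where f: "f = {a, b}" "straddles c a b" "{a, b} \<in> edges_of T"
    using crossing_edgesE[OF assms] .
  have "convex hull {a, b} \<subseteq> convex hull P"
    using edge_vertices_in_P[OF triangulation f(3)] by (intro hull_mono) auto
  then show ?thesis using cross_point_in_hull2[OF f(2)] f(1) by blast
qed

lemma straddling_triangle_sides: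
  assumes "{u, w, d} \<in> T" "straddling_triangle c u w d"
  shows "{u, w} \<in> crossing_edges" "{u, d} \<in> crossing_edges"
proof -
  interpret straddling_triangle c u w d by fact
  have "u \<noteq> w" "u \<noteq> d" using straddles_uw straddles_ud by auto
  then show "{u, w} \<in> crossing_edges" "{u, d} \<in> crossing_edges"
    using crossing_edgesI straddles_uw straddles_ud
      edges_ofI[OF assms(1), of u w] edges_ofI[OF assms(1), of u d] by simp_all
qed

end

section \<open>The fan at a common vertex\<close>

text \<open>At the first point of \<open>(0, 1)\<close> where one of the two affine interpolations
  vanishes, the other one still has its initial sign.\<close>

lemma affine_first_zero:
  fixes F0 F1 G0 G1 :: real
  assumes F0: "0 < F0" and G0: "G0 < 0" and exits: "F1 < 0 \<or> 0 < G1"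
  obtains \<mu> where "0 < \<mu>" "\<mu> < 1"
    "(1 - \<mu>) * F0 + \<mu> * F1 = 0 \<and> (1 - \<mu>) * G0 + \<mu> * G1 \<le> 0
     \<or> (1 - \<mu>) * G0 + \<mu> * G1 = 0 \<and> 0 \<le> (1 - \<mu>) * F0 + \<mu> * F1"
proof -
  define \<mu>F where "\<mu>F = F0 / (F0 - F1)"
  define \<mu>G where "\<mu>G = G0 / (G0 - G1)"
  have affine: "(1 - m) * X0 + m * X1 = X0 + m * (X1 - X0)" for m X0 X1 :: real
    by (simp add: algebra_simps)
  have zero_F: "0 < \<mu>F" "\<mu>F < 1" "(1 - \<mu>F) * F0 + \<mu>F * F1 = 0" if "F1 < 0"
    using F0 that unfolding \<mu>F_def by (auto simp: divide_less_eq field_simps)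
  have zero_G: "0 < \<mu>G" "\<mu>G < 1" "(1 - \<mu>G) * G0 + \<mu>G * G1 = 0" if "0 < G1"
    using G0 that unfolding \<mu>G_def by (auto simp: divide_less_eq divide_neg_neg field_simps)
  consider "F1 < 0" "G1 \<le> 0 \<or> \<mu>F \<le> \<mu>G" | "0 < G1" "0 \<le> F1 \<or> \<mu>G < \<mu>F"
    using exits by linarith
  then show ?thesis
  proof cases
    case 1
    have "(1 - \<mu>F) * G0 + \<mu>F * G1 \<le> 0"
    proof (cases "G1 \<le> 0")
      case True
      then show ?thesis using zero_F[OF 1(1)] G0 by (simp add: add_nonpos_nonpos mult_nonneg_nonpos)
    next
      case False
      then have "G0 + \<mu>F * (G1 - G0) \<le> G0 + \<mu>G * (G1 - G0)"
        using 1(2) G0 by (simp add: mult_right_mono)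
      then show ?thesis using zero_G False unfolding affine by simp
    qed
    then show ?thesis using that zero_F[OF 1(1)] by blast
  next
    case 2
    have "0 \<le> (1 - \<mu>G) * F0 + \<mu>G * F1"
    proof (cases "0 \<le> F1")
      case True
      then show ?thesis using zero_G[OF 2(1)] F0 by simp
    next
      case False
      then have "F0 + \<mu>F * (F1 - F0) \<le> F0 + \<mu>G * (F1 - F0)"
        using 2(2) F0 by (simp add: mult_right_mono_neg)
      then show ?thesis using zero_F False unfolding affine by simp
    qed
    then show ?thesis using that zero_G[OF 2(1)] by blast
  qed
qed

text \<open>A segment from a point of the side \<open>pq\<close> of a triangle \<open>vpq\<close> to a point
  \<open>a\<close> outside it, but on the same side of \<open>pq\<close> as \<open>v\<close>, leaves the triangle
  through one of the sides \<open>vp\<close>, \<open>vq\<close>.\<close>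

lemma segment_leaves_triangle:
  assumes K: "orient v p q \<noteq> 0" and z: "z = lerp p q \<theta>" "0 < \<theta>" "\<theta> < 1"
    and side: "0 \<le> orient v p q * orient p q a" and out: "a \<notin> convex hull {v, p, q}"
  obtains \<mu> where "0 < \<mu>" "\<mu> < 1"
    "orient v p (lerp z a \<mu>) = 0 \<and> orient v p q * orient v q (lerp z a \<mu>) \<le> 0
     \<or> orient v q (lerp z a \<mu>) = 0 \<and> 0 \<le> orient v p q * orient v p (lerp z a \<mu>)"
proof -
  define K where "K = orient v p q"
  have KK: "0 < K * K" using assms(1) unfolding K_def by (auto simp: zero_less_mult_iff linorder_neq_iff)
  have "orient v q p = - K" unfolding K_def by (rule orient_swap)
  then have "K * orient v p z = \<theta> * (K * K)" "K * orient v q z = - ((1 - \<theta>) * (K * K))"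
    unfolding z(1) K_def by (simp_all add: orient_lerp)
  moreover have "0 < \<theta> * (K * K)" "0 < (1 - \<theta>) * (K * K)" using KK z(2,3) by simp_all
  ultimately have "0 < K * orient v p z" "K * orient v q z < 0" by linarith+
  moreover have "K * orient v p a < 0 \<or> 0 < K * orient v q a"
  proof (rule ccontr)
    assume "\<not> ?thesis"
    moreover have "orient q v a = - orient v q a" by (simp add: orient_def algebra_simps)
    ultimately have "a \<in> convex hull {v, p, q}"
      using side K unfolding K_def by (intro in_hull3_if_orient_signs) (auto simp: orient_rotate)
    then show False using out by contradiction
  qed
  ultimately obtain \<mu> where "0 < \<mu>" "\<mu> < 1"
    "(1 - \<mu>) * (K * orient v p z) + \<mu> * (K * orient v p a) = 0
       \<and> (1 - \<mu>) * (K * orient v q z) + \<mu> * (K * orient v q a) \<le> 0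
     \<or> (1 - \<mu>) * (K * orient v q z) + \<mu> * (K * orient v q a) = 0
       \<and> 0 \<le> (1 - \<mu>) * (K * orient v p z) + \<mu> * (K * orient v p a)"
    by (rule affine_first_zero)
  moreover have "(1 - \<mu>) * (K * orient v x z) + \<mu> * (K * orient v x a) = K * orient v x (lerp z a \<mu>)"
    for x by (simp add: orient_lerp algebra_simps)
  ultimately show ?thesis using that K unfolding K_def by auto
qed

text \<open>A point of the line \<open>vp\<close>, with \<open>p\<close> on the vertical line, lying in the
  wedge \<open>qvp\<close> and strictly on the side of \<open>v\<close> lies on the segment from \<open>v\<close> to \<open>p\<close>.\<close>

lemma wedge_side_point_on_segment:
  assumes K: "orient v (c, Y1) (c, Y2) \<noteq> 0" and o1: "orient v (c, Y1) m = 0"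
    and o2: "orient v (c, Y1) (c, Y2) * orient v (c, Y2) m \<le> 0"
    and side: "(fst m - c) * (fst v - c) > 0"
  obtains \<tau> where "0 \<le> \<tau>" "\<tau> < 1" "m = lerp v (c, Y1) \<tau>"
proof -
  define K where "K = orient v (c, Y1) (c, Y2)"
  have vc: "c - fst v \<noteq> 0" using K unfolding orient_def by auto
  define \<tau> where "\<tau> = (fst m - fst v) / (c - fst v)"
  have "(c - fst v) * (snd m - snd v) = (Y1 - snd v) * (fst m - fst v)"
    using o1 unfolding orient_def by simp
  then have "snd m = snd v + \<tau> * (Y1 - snd v)" using vc unfolding \<tau>_def by (simp add: field_simps)
  moreover have fm: "fst m = fst v + \<tau> * (c - fst v)" using vc unfolding \<tau>_def by simp
  ultimately have m: "m = lerp v (c, Y1) \<tau>" by (simp add: lerp_def prod_eq_iff)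
  have "orient v (c, Y2) (c, Y1) = - K" unfolding K_def by (rule orient_swap)
  then have "K * orient v (c, Y2) m = - (\<tau> * (K * K))" unfolding m by (simp add: orient_lerp)
  moreover have "K * K > 0" using K unfolding K_def by (auto simp: zero_less_mult_iff linorder_neq_iff)
  ultimately have "\<tau> \<ge> 0" using o2 unfolding K_def by (simp add: zero_le_mult_iff)
  moreover have "(1 - \<tau>) * ((c - fst v) * (c - fst v)) > 0"
    using side unfolding fm by (simp add: algebra_simps)
  then have "1 - \<tau> > 0" using vc by (simp add: zero_less_mult_iff)
  ultimately show ?thesis using that m by auto
qed

context separated_triangulation
begin

lemma segment_meets_crossing_edge_at_vertex:
  assumes f: "{v, w} \<in> edges_of T" "straddles c v w"
    and h: "{a, b} \<in> edges_of T" "straddles c a b" and side: "(fst a - c) * (fst v - c) > 0"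
    and m_f: "m = lerp v (c, cross_height c {v, w}) \<tau>" "0 \<le> \<tau>" "\<tau> < 1"
    and m_h: "m = lerp (c, cross_height c {a, b}) a \<mu>" "0 < \<mu>" "\<mu> < 1"
  shows "a = v"
proof -
  have sf: "0 < cross_param c v w" "cross_param c v w < 1" using cross_param_bounds[OF f(2)] by auto
  have sh: "0 < cross_param c a b" "cross_param c a b < 1" using cross_param_bounds[OF h(2)] by auto
  have on_h: "m = lerp a b ((1 - \<mu>) * cross_param c a b)"
    using m_h(1) cross_point_eq[OF h(2)] lerp_lerp_right by simp
  have on_f: "m = lerp v w (\<tau> * cross_param c v w)"
    using m_f(1) cross_point_eq[OF f(2)] lerp_lerp_left by simp
  have "(1 - \<mu>) * cross_param c a b < 1 * cross_param c a b"
    using sh m_h(2) by (intro mult_strict_right_mono) auto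
  then have "(1 - \<mu>) * cross_param c a b < 1" using sh by linarith
  moreover have "0 < (1 - \<mu>) * cross_param c a b" using sh m_h(3) by simp
  ultimately have h_open: "0 < (1 - \<mu>) * cross_param c a b" "(1 - \<mu>) * cross_param c a b < 1"
    by simp_all
  have P: "v \<in> P" "w \<in> P" "a \<in> P" "b \<in> P"
    using edge_vertices_in_P[OF triangulation f(1)] edge_vertices_in_P[OF triangulation h(1)] by auto
  have ne: "a \<noteq> b" "v \<noteq> w" using h(2) f(2) by auto
  show ?thesis
  proof (cases "\<tau> = 0")
    case True
    then have "v = lerp a b ((1 - \<mu>) * cross_param c a b)" using on_f on_h by simp
    then show ?thesis using general_position_lerp_notin[OF general_position P(3,4) ne(1) h_open] P(1)
      by simp
  next
    case False
    have "\<tau> * cross_param c v w < 1 * cross_param c v w"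
      using sf m_f(3) by (intro mult_strict_right_mono) auto
    then have "\<tau> * cross_param c v w < 1" using sf by linarith
    moreover have "0 < \<tau> * cross_param c v w" using False m_f(2) sf by simp
    ultimately have "{v, w} = {a, b}"
      using edges_eq_if_open_segments_meet[OF triangulation general_position f(1) h(1) ne(2,1)]
        on_f on_h h_open by metis
    moreover have "a \<noteq> w" using side f(2) by (auto simp: mult_less_0_iff zero_less_mult_iff)
    ultimately show ?thesis by auto
  qed
qed

text \<open>Otherwise the edge \<open>ab\<close>, running from its crossing point to \<open>a\<close>, would
  leave the empty region through \<open>vw\<close> or \<open>vw'\<close>, crossing an edge of the triangulation.\<close>

lemma fan_at_common_vertex:
  assumes f: "{v, w} \<in> edges_of T" "straddles c v w"
    and g: "{v, w'} \<in> edges_of T" "straddles c v w'"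
    and empty: "convex hull {v, (c, cross_height c {v, w}), (c, cross_height c {v, w'})} \<inter> P \<subseteq> {v}"
    and h: "{a, b} \<in> edges_of T" "straddles c a b" and side: "(fst a - c) * (fst v - c) > 0"
    and between: "(cross_height c {a, b} - cross_height c {v, w})
      * (cross_height c {a, b} - cross_height c {v, w'}) < 0"
  shows "a = v"
proof (rule ccontr)
  assume "a \<noteq> v"
  define Yf where "Yf = cross_height c {v, w}"
  define Yg where "Yg = cross_height c {v, w'}"
  define Yh where "Yh = cross_height c {a, b}"
  define K where "K = orient v (c, Yf) (c, Yg)"
  have K_eq: "K = (c - fst v) * (Yg - Yf)" unfolding K_def orient_def by (simp add: algebra_simps)
  have "Yf \<noteq> Yg" using between unfolding Yf_def Yg_def by auto
  then have K: "K \<noteq> 0" using K_eq f(2) by auto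
  define \<theta> where "\<theta> = (Yh - Yf) / (Yg - Yf)"
  have "Yf < Yh \<and> Yh < Yg \<or> Yg < Yh \<and> Yh < Yf"
    using between unfolding Yf_def Yg_def Yh_def by (auto simp: mult_less_0_iff)
  then have \<theta>: "0 < \<theta>" "\<theta> < 1" unfolding \<theta>_def by (auto simp: divide_less_eq zero_less_divide_iff)
  have zh: "(c, Yh) = lerp (c, Yf) (c, Yg) \<theta>" using \<open>Yf \<noteq> Yg\<close> unfolding \<theta>_def lerp_def by simp
  have "K * orient (c, Yf) (c, Yg) a = ((fst a - c) * (fst v - c)) * ((Yg - Yf) * (Yg - Yf))"
    unfolding K_eq orient_def by (simp add: algebra_simps)
  then have wedge_side: "0 \<le> K * orient (c, Yf) (c, Yg) a" using side by simp
  have "a \<in> P" using edge_vertices_in_P[OF triangulation h(1)] by simp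
  then have "a \<notin> convex hull {v, (c, Yf), (c, Yg)}"
    using empty \<open>a \<noteq> v\<close> unfolding Yf_def Yg_def by blast
  then obtain \<mu> where \<mu>: "0 < \<mu>" "\<mu> < 1" and exit:
    "orient v (c, Yf) (lerp (c, Yh) a \<mu>) = 0 \<and> K * orient v (c, Yg) (lerp (c, Yh) a \<mu>) \<le> 0
     \<or> orient v (c, Yg) (lerp (c, Yh) a \<mu>) = 0 \<and> 0 \<le> K * orient v (c, Yf) (lerp (c, Yh) a \<mu>)"
    using segment_leaves_triangle[OF K[unfolded K_def] zh \<theta> wedge_side[unfolded K_def]]
    unfolding K_def by blast
  define m where "m = lerp (c, Yh) a \<mu>"
  have "(fst m - c) * (fst v - c) = \<mu> * ((fst a - c) * (fst v - c))"
    unfolding m_def lerp_def by (simp add: algebra_simps)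
  moreover have "0 < \<mu> * ((fst a - c) * (fst v - c))" using \<mu>(1) side by simp
  ultimately have m_side: "(fst m - c) * (fst v - c) > 0" by linarith
  have swap: "orient v (c, Yg) (c, Yf) = - K" unfolding K_def by (rule orient_swap)
  from exit show False unfolding m_def[symmetric]
  proof (elim disjE conjE)
    assume "orient v (c, Yf) m = 0" "K * orient v (c, Yg) m \<le> 0"
    then obtain \<tau> where "0 \<le> \<tau>" "\<tau> < 1" "m = lerp v (c, Yf) \<tau>"
      using wedge_side_point_on_segment K m_side unfolding K_def by blast
    then show False using segment_meets_crossing_edge_at_vertex[OF f h side] \<mu> \<open>a \<noteq> v\<close>
      unfolding m_def Yf_def Yh_def by blast
  next
    assume "orient v (c, Yg) m = 0" "0 \<le> K * orient v (c, Yf) m"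
    moreover have "orient v (c, Yg) (c, Yf) \<noteq> 0" using K swap by simp
    ultimately obtain \<tau> where "0 \<le> \<tau>" "\<tau> < 1" "m = lerp v (c, Yg) \<tau>"
      using wedge_side_point_on_segment m_side swap by (metis mult_minus_left neg_le_0_iff_le)
    then show False using segment_meets_crossing_edge_at_vertex[OF g h side] \<mu> \<open>a \<noteq> v\<close>
      unfolding m_def Yg_def Yh_def by blast
  qed
qed

end

section \<open>Hull edges\<close>

lemma lerp_interior_convex:
  fixes S :: "pt set"
  assumes "convex S" "a \<in> closure S" "b \<in> closure S" "lerp a b s1 \<in> interior S"
    "0 \<le> s1" "s1 \<le> 1" "0 < s" "s < 1"
  shows "lerp a b s \<in> interior S"
proof (cases "s1 < s")
  case True
  define e where "e = (1 - s) / (1 - s1)"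
  have e: "0 < e" "e \<le> 1" using True assms(7,8) unfolding e_def by (auto simp: divide_le_eq)
  have e_eq: "e * (1 - s1) = 1 - s" using True assms(8) unfolding e_def by simp
  have "l - e * (l - (k + s1 * (l - k))) = k + s * (l - k)" for k l :: real
  proof -
    have "l - e * (l - (k + s1 * (l - k))) = l - (e * (1 - s1)) * (l - k)"
      by (simp add: algebra_simps)
    then show ?thesis unfolding e_eq by (simp add: algebra_simps)
  qed
  then have "b - e *\<^sub>R (b - lerp a b s1) = lerp a b s"
    by (simp add: prod_eq_iff lerp_def)
  then show ?thesis using mem_interior_closure_convex_shrink[OF assms(1,4,3) e] by simp
next
  case False
  define e where "e = s / s1"
  have e: "0 < e" "e \<le> 1" using False assms(7) unfolding e_def by (auto simp: divide_le_eq)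
  have "a - e *\<^sub>R (a - lerp a b s1) = lerp a b s" using False assms(7) unfolding e_def
    by (simp add: prod_eq_iff lerp_def field_simps)
  then show ?thesis using mem_interior_closure_convex_shrink[OF assms(1,4,2) e] by simp
qed

lemma vline_interior_convex:
  fixes S :: "pt set"
  assumes "convex S" "(c, Y0) \<in> interior S" "(c, Y2) \<in> closure S" "(Y1 - Y0) * (Y1 - Y2) < 0"
  shows "(c, Y1) \<in> interior S"
proof -
  define e where "e = (Y2 - Y1) / (Y2 - Y0)"
  have e: "0 < e" "e \<le> 1" using assms(4) unfolding e_def
    by (auto simp: mult_less_0_iff divide_le_eq zero_less_divide_iff)
  have "Y2 \<noteq> Y0" using assms(4) by auto
  then have "(c, Y2) - e *\<^sub>R ((c, Y2) - (c, Y0)) = (c, Y1)" unfolding e_def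
    by (simp add: field_simps)
  then show ?thesis using mem_interior_closure_convex_shrink[OF assms(1,2,3) e] by simp
qed

context separated_triangulation
begin

lemma closure_hull: "closure (convex hull P) = convex hull P"
  using finite_P by (simp add: closure_closed compact_imp_closed compact_convex_hull finite_imp_compact)

lemma hull_edge_iff_cross_point_not_interior:
  assumes "f \<in> crossing_edges"
  shows "hull_edge P f \<longleftrightarrow> (c, cross_height c f) \<notin> interior (convex hull P)"
proof -
  obtain a b where f: "f = {a, b}" "straddles c a b" "{a, b} \<in> edges_of T"
    using crossing_edgesE[OF assms] .
  have P: "a \<in> P" "b \<in> P" using edge_vertices_in_P[OF triangulation f(3)] by auto
  have "a \<noteq> b" using f(2) by auto
  then have "hull_edge P f \<longleftrightarrow> convex hull f \<subseteq> frontier (convex hull P)"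
    unfolding hull_edge_def using f(1) P by blast
  also have "\<dots> \<longleftrightarrow> convex hull f \<inter> interior (convex hull P) = {}"
    using hull_mono[of f P] P f(1) closure_hull unfolding frontier_def by blast
  also have "\<dots> \<longleftrightarrow> (c, cross_height c f) \<notin> interior (convex hull P)"
  proof
    assume "convex hull f \<inter> interior (convex hull P) = {}"
    then show "(c, cross_height c f) \<notin> interior (convex hull P)"
      using cross_point_in_hull2[OF f(2)] f(1) by blast
  next
    assume not_int: "(c, cross_height c f) \<notin> interior (convex hull P)"
    show "convex hull f \<inter> interior (convex hull P) = {}"
    proof (rule ccontr)
      assume "convex hull f \<inter> interior (convex hull P) \<noteq> {}"
      then obtain m where "m \<in> convex hull {a, b}" "m \<in> interior (convex hull P)"
        using f(1) by blast
      then obtain s1 where s1: "0 \<le> s1" "s1 \<le> 1" "lerp a b s1 \<in> interior (convex hull P)"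
        by (elim hull2_lerpE) blast
      have "a \<in> closure (convex hull P)" "b \<in> closure (convex hull P)"
        using closure_hull hull_inc[OF P(1)] hull_inc[OF P(2)] by simp_all
      then have "lerp a b (cross_param c a b) \<in> interior (convex hull P)"
        using lerp_interior_convex[OF convex_convex_hull _ _ s1(3,1,2)] cross_param_bounds[OF f(2)]
        by blast
      then show False using not_int cross_point_eq[OF f(2)] f(1) by simp
    qed
  qed
  finally show ?thesis .
qed

lemma hull_edges_bracket_interior:
  assumes "f1 \<in> crossing_edges" "hull_edge P f1" "f2 \<in> crossing_edges" "hull_edge P f2" "f1 \<noteq> f2"
    and "(c, Y0) \<in> interior (convex hull P)"
  shows "(cross_height c f1 - Y0) * (cross_height c f2 - Y0) \<le> 0"
proof (rule ccontr)
  define Y1 where "Y1 = cross_height c f1"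
  define Y2 where "Y2 = cross_height c f2"
  assume "\<not> (cross_height c f1 - Y0) * (cross_height c f2 - Y0) \<le> 0"
  moreover have "Y1 \<noteq> Y2" using inj_on_cross_height assms(1,3,5) unfolding Y1_def Y2_def inj_on_def by blast
  ultimately consider "(Y1 - Y0) * (Y1 - Y2) < 0" | "(Y2 - Y0) * (Y2 - Y1) < 0"
    using nearer_strictly_between unfolding Y1_def Y2_def by force
  then show False
  proof cases
    case 1
    then have "(c, Y1) \<in> interior (convex hull P)"
      using vline_interior_convex[OF convex_convex_hull assms(6)] crossing_point_in_hull[OF assms(3)]
        closure_hull unfolding Y2_def by simp
    then show False using hull_edge_iff_cross_point_not_interior[OF assms(1)] assms(2) Y1_def by simp
  next
    case 2
    then have "(c, Y2) \<in> interior (convex hull P)"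
      using vline_interior_convex[OF convex_convex_hull assms(6)] crossing_point_in_hull[OF assms(1)]
        closure_hull unfolding Y1_def by simp
    then show False using hull_edge_iff_cross_point_not_interior[OF assms(3)] assms(4) Y2_def by simp
  qed
qed

end

section \<open>Every T-path contains every good edge\<close>

context separated_triangulation
begin

text \<open>The fan lemma applied twice: first to the good edge \<open>e\<close>, which therefore
  ends at \<open>v\<close>, then to the edge \<open>ru\<close> of the triangle \<open>uvr\<close> on the other side
  of \<open>e\<close>, where \<open>r\<close> is the opposite vertex of \<open>e\<close> on the side of \<open>v\<close>.
  The second application is possible because \<open>vw\<close> and \<open>vw'\<close> cannot cross the line
  inside the triangle \<open>uvr\<close>, so \<open>ru\<close> crosses it between them as well.\<close>

lemma good_edge_not_inside_fan:
  assumes good: "good_edge P T c e"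
    and f: "{v, w} \<in> edges_of T" "straddles c v w" and g: "{v, w'} \<in> edges_of T" "straddles c v w'"
    and empty: "convex hull {v, (c, cross_height c {v, w}), (c, cross_height c {v, w'})} \<inter> P \<subseteq> {v}"
    and between: "(cross_height c e - cross_height c {v, w}) * (cross_height c e - cross_height c {v, w'}) < 0"
  shows False
proof -
  have eT: "e \<in> edges_of T" and "crosses c e"
    and opp: "\<exists>p q. opposite_vertices T e p q"
    and sides: "\<And>p q. opposite_vertices T e p q \<Longrightarrow> (fst p < c) \<noteq> (fst q < c)"
    using good unfolding good_edge_def flippable_def by blast+
  then obtain a b where ab: "e = {a, b}" "straddles c a b" unfolding crosses_iff_straddles by blast
  have v_off: "fst v \<noteq> c" using f(2) by auto
  define Y0 where "Y0 = cross_height c e"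
  have "v \<in> e"
  proof -
    have "(fst a - c) * (fst v - c) > 0 \<or> (fst b - c) * (fst v - c) > 0"
      using ab(2) v_off by (auto simp: mult_less_0_iff zero_less_mult_iff)
    then obtain x y where xy: "e = {x, y}" "straddles c x y" "(fst x - c) * (fst v - c) > 0"
      using ab straddles_sym[OF ab(2)] by (metis insert_commute)
    then have "x = v" using fan_at_common_vertex[OF f g empty, of x y] eT between by simp
    then show ?thesis using xy by simp
  qed
  then obtain u where eu: "e = {v, u}" "straddles c v u" using straddling_edge_at_endpointE[OF ab] by blast
  obtain p q where pq: "opposite_vertices T e p q" using opp by blast
  have "p \<in> P" "q \<in> P"
    using pq triangulationD(1)[OF triangulation] unfolding opposite_vertices_def by blast+
  then have "fst p \<noteq> c" "fst q \<noteq> c" using off_line by auto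
  then have "(fst p - c) * (fst v - c) > 0 \<or> (fst q - c) * (fst v - c) > 0"
    using sides[OF pq] v_off by (auto simp: zero_less_mult_iff)
  then obtain r where r: "insert r e \<in> T" "r \<notin> e" "(fst r - c) * (fst v - c) > 0"
    using pq unfolding opposite_vertices_def by blast
  have ur: "straddles c u r" using r(3) eu(2) by (auto simp: mult_less_0_iff zero_less_mult_iff)
  have tT: "{u, v, r} \<in> T" using r(1) eu(1) by (simp add: insert_commute)
  have tri: "straddling_triangle c u v r"
    using straddling_triangleI[OF tT straddles_sym[OF eu(2)] ur] .
  have ruT: "{r, u} \<in> edges_of T" using edges_ofI[OF tT, of r u] r(2) eu(1) by auto
  define Y' where "Y' = cross_height c {r, u}"
  have Y0_eq: "cross_height c {u, v} = Y0" unfolding Y0_def eu(1) by (simp add: insert_commute)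
  have Y'_eq: "cross_height c {u, r} = Y'" unfolding Y'_def by (simp add: insert_commute)
  have "\<not> (cross_height c {v, w} - Y0) * (cross_height c {v, w} - Y') < 0"
    "\<not> (cross_height c {v, w'} - Y0) * (cross_height c {v, w'} - Y') < 0"
    using no_edge_crosses_inside[OF tT tri f] no_edge_crosses_inside[OF tT tri g] Y0_eq Y'_eq
    by simp_all
  moreover have "v \<notin> {r, u}" using r(2) eu by auto
  then have "cross_height c {v, w} \<noteq> Y'" "cross_height c {v, w'} \<noteq> Y'" "Y0 \<noteq> Y'"
    using cross_height_inj[OF f(1) ruT f(2) straddles_sym[OF ur]]
      cross_height_inj[OF g(1) ruT g(2) straddles_sym[OF ur]]
      cross_height_inj[OF eT[unfolded eu(1)] ruT eu(2) straddles_sym[OF ur]]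
    unfolding Y'_def Y0_def eu(1) by auto
  moreover have "(cross_height c {v, w} - Y0) * (cross_height c {v, w'} - Y0) < 0"
    using between unfolding Y0_def by (simp add: algebra_simps)
  ultimately have "(Y' - cross_height c {v, w}) * (Y' - cross_height c {v, w'}) < 0"
    using between_if_no_point_between by blast
  then have "r = v"
    using fan_at_common_vertex[OF f g empty ruT straddles_sym[OF ur] r(3)] unfolding Y'_def by simp
  then show False using r(2) eu(1) by simp
qed

lemma T_path_crossing_edges: "is_T_path P T c \<pi> \<Longrightarrow> f \<in> set \<pi> \<Longrightarrow> f \<in> crossing_edges"
  unfolding is_T_path_def crossing_edges_def by blast

lemma T_path_bracketing_step:
  assumes path: "is_T_path P T c \<pi>" and Y0: "(c, Y0) \<in> interior (convex hull P)"
  obtains i where "Suc i < length \<pi>"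
    "(cross_height c (\<pi> ! i) - Y0) * (cross_height c (\<pi> ! Suc i) - Y0) \<le> 0"
proof -
  define n where "n = length \<pi>"
  have ne: "\<pi> \<noteq> []" and hull: "hull_edge P (hd \<pi>)" "hull_edge P (last \<pi>)"
    and ends: "hd \<pi> \<noteq> last \<pi>"
    using path unfolding is_T_path_def by blast+
  have "n \<noteq> 1"
  proof
    assume "n = 1"
    then obtain x where "\<pi> = [x]" unfolding n_def by (metis One_nat_def length_0_conv length_Suc_conv)
    then show False using ends by simp
  qed
  moreover have "n \<noteq> 0" using ne unfolding n_def by simp
  ultimately have n: "n \<ge> 2" by linarith
  have first: "hd \<pi> = \<pi> ! 0" using ne by (simp add: hd_conv_nth)
  have "n - 1 = Suc (n - 2)" using n by simp
  then have last: "last \<pi> = \<pi> ! Suc (n - 2)" using ne unfolding n_def by (simp add: last_conv_nth)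
  have "\<pi> ! 0 \<in> set \<pi>" "\<pi> ! Suc (n - 2) \<in> set \<pi>"
    using n unfolding n_def by (auto intro!: nth_mem)
  then have "\<pi> ! 0 \<in> crossing_edges" "\<pi> ! Suc (n - 2) \<in> crossing_edges"
    using T_path_crossing_edges[OF path] by blast+
  then have "(cross_height c (\<pi> ! 0) - Y0) * (cross_height c (\<pi> ! Suc (n - 2)) - Y0) \<le> 0"
    using hull_edges_bracket_interior[OF _ _ _ _ _ Y0] hull ends unfolding first last by blast
  then obtain i where "i \<le> n - 2"
    and "(cross_height c (\<pi> ! i) - Y0) * (cross_height c (\<pi> ! Suc i) - Y0) \<le> 0"
    using discrete_sign_change[of "\<lambda>i. cross_height c (\<pi> ! i)"] by blast
  moreover from this(1) have "Suc i < length \<pi>" using n unfolding n_def by linarith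
  ultimately show ?thesis using that by blast
qed

lemma T_path_consecutive_fan:
  assumes path: "is_T_path P T c \<pi>" and i: "Suc i < length \<pi>"
  obtains v w w' where "\<pi> ! i = {v, w}" "straddles c v w" "\<pi> ! Suc i = {v, w'}" "straddles c v w'"
    "convex hull {v, (c, cross_height c {v, w}), (c, cross_height c {v, w'})} \<inter> P \<subseteq> {v}"
proof -
  have "card (\<pi> ! i \<inter> \<pi> ! Suc i) = 1"
    and region: "region c (\<pi> ! i) (\<pi> ! Suc i) \<inter> P \<subseteq> \<pi> ! i \<inter> \<pi> ! Suc i"
    using path i unfolding is_T_path_def by blast+
  then obtain v where v: "\<pi> ! i \<inter> \<pi> ! Suc i = {v}" using card_1_singletonE by blast
  have "\<pi> ! i \<in> crossing_edges" "\<pi> ! Suc i \<in> crossing_edges"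
    using T_path_crossing_edges[OF path] i by auto
  moreover have "v \<in> \<pi> ! i" "v \<in> \<pi> ! Suc i" using v by auto
  ultimately obtain w w' where w: "\<pi> ! i = {v, w}" "straddles c v w"
    and w': "\<pi> ! Suc i = {v, w'}" "straddles c v w'"
    by (metis crossing_edgesE straddling_edge_at_endpointE)
  show ?thesis
    using that[OF w w'] region region_eq_triangle[OF w(2) w'(2)] v unfolding w(1) w'(1) by auto
qed

lemma T_path_contains_good_edge:
  assumes good: "good_edge P T c e" and path: "is_T_path P T c \<pi>"
  shows "e \<in> set \<pi>"
proof -
  have e: "e \<in> crossing_edges" "\<not> hull_edge P e"
    using good unfolding good_edge_def flippable_def crossing_edges_def by blast+
  define Y0 where "Y0 = cross_height c e"
  have "(c, Y0) \<in> interior (convex hull P)"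
    using hull_edge_iff_cross_point_not_interior[OF e(1)] e(2) unfolding Y0_def by blast
  then obtain i where i: "Suc i < length \<pi>"
    and step: "(cross_height c (\<pi> ! i) - Y0) * (cross_height c (\<pi> ! Suc i) - Y0) \<le> 0"
    using T_path_bracketing_step[OF path] by blast
  show ?thesis
  proof (cases "(cross_height c (\<pi> ! i) - Y0) * (cross_height c (\<pi> ! Suc i) - Y0) = 0")
    case True
    moreover have "\<pi> ! i \<in> crossing_edges" "\<pi> ! Suc i \<in> crossing_edges"
      using T_path_crossing_edges[OF path] i by auto
    ultimately have "\<pi> ! i = e \<or> \<pi> ! Suc i = e"
      using inj_on_cross_height e(1) unfolding Y0_def inj_on_def by auto
    then show ?thesis using i by (metis Suc_lessD nth_mem)
  next
    case False
    obtain v w w' where f: "\<pi> ! i = {v, w}" "straddles c v w" and g: "\<pi> ! Suc i = {v, w'}" "straddles c v w'"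
      and empty: "convex hull {v, (c, cross_height c {v, w}), (c, cross_height c {v, w'})} \<inter> P \<subseteq> {v}"
      using T_path_consecutive_fan[OF path i] .
    have "\<pi> ! i \<in> edges_of T" "\<pi> ! Suc i \<in> edges_of T"
      using T_path_crossing_edges[OF path] i unfolding crossing_edges_def by auto
    moreover have "(Y0 - cross_height c {v, w}) * (Y0 - cross_height c {v, w'}) < 0"
      using step False unfolding f(1) g(1) by (simp add: algebra_simps)
    ultimately show ?thesis
      using good_edge_not_inside_fan[OF good _ f(2) _ g(2) empty] f(1) g(1) unfolding Y0_def by simp
  qed
qed

end

section \<open>Existence of the T-path\<close>

context separated_triangulation
begin

lemma apex_region_empty:
  assumes "{u, w, d} \<in> T" "straddling_triangle c u w d"
  shows "convex hull {u, (c, cross_height c {u, w}), (c, cross_height c {u, d})} \<inter> P \<subseteq> {u}"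
proof
  interpret straddling_triangle c u w d by fact
  fix z assume z: "z \<in> convex hull {u, (c, Yw), (c, Yd)} \<inter> P"
  have "(c, Yw) \<in> convex hull {u, w, d}" "(c, Yd) \<in> convex hull {u, w, d}"
    using cross_point_in_hull2[OF straddles_uw] cross_point_in_hull2[OF straddles_ud]
      hull_mono[of "{u, w}" "{u, w, d}"] hull_mono[of "{u, d}" "{u, w, d}"] by auto
  then have "{u, (c, Yw), (c, Yd)} \<subseteq> convex hull {u, w, d}" by (simp add: hull_inc)
  then have "convex hull {u, (c, Yw), (c, Yd)} \<subseteq> convex hull {u, w, d}"
    by (simp add: convex_convex_hull hull_minimal)
  then have "z \<in> {u, w, d}" using z triangulationD(4)[OF triangulation assms(1)] by auto
  moreover have "(fst u - c) * (fst z - c) \<ge> 0"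
    using hull_same_closed_side[of "{u, (c, Yw), (c, Yd)}" "fst u - c" c z] z by auto
  ultimately show "z \<in> {u}" using straddles_uw straddles_ud by auto
qed

lemma extreme_crossing_edge_is_hull_edge:
  assumes f: "f \<in> crossing_edges" and \<sigma>: "\<sigma> = 1 \<or> \<sigma> = -1"
    and extreme: "\<forall>g\<in>crossing_edges. \<sigma> * cross_height c f \<le> \<sigma> * cross_height c g"
  shows "hull_edge P f"
proof (rule ccontr)
  define Yf where "Yf = cross_height c f"
  assume "\<not> hull_edge P f"
  then have "(c, Yf) \<in> interior (convex hull P)"
    using hull_edge_iff_cross_point_not_interior[OF f] unfolding Yf_def by blast
  then obtain \<epsilon> where \<epsilon>: "\<epsilon> > 0" "ball (c, Yf) \<epsilon> \<subseteq> convex hull P"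
    using mem_interior by blast
  define y where "y = Yf - \<sigma> * (\<epsilon> / 2)"
  have "dist (c, Yf) (c, y) = \<epsilon> / 2" unfolding y_def using \<sigma> \<epsilon>(1)
    by (auto simp: dist_Pair_Pair dist_real_def)
  then have "(c, y) \<in> convex hull P" using \<epsilon> by auto
  then obtain t where t: "t \<in> T" "(c, y) \<in> convex hull t"
    using triangulation unfolding triangulation_def by blast
  then obtain u w d where uwd: "t = {u, w, d}" "straddling_triangle c u w d"
    by (rule triangle_meeting_vline_apexE)
  have between: "(y - cross_height c {u, w}) * (y - cross_height c {u, d}) \<le> 0"
    using straddling_triangle.vline_hull_between[OF uwd(2)] t(2) uwd(1) by simp
  have "\<sigma> * Yf \<le> \<sigma> * cross_height c {u, w}" "\<sigma> * Yf \<le> \<sigma> * cross_height c {u, d}"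
    using extreme straddling_triangle_sides[OF t(1)[unfolded uwd(1)] uwd(2)] unfolding Yf_def by auto
  moreover have "\<sigma> * y = \<sigma> * Yf - \<epsilon> / 2" unfolding y_def using \<sigma> by auto
  ultimately have "\<sigma> * (y - cross_height c {u, w}) < 0" "\<sigma> * (y - cross_height c {u, d}) < 0"
    using \<epsilon>(1) by (simp_all add: algebra_simps)
  then have "0 < (\<sigma> * (y - cross_height c {u, w})) * (\<sigma> * (y - cross_height c {u, d}))"
    by (rule mult_neg_neg)
  also have "\<dots> = (y - cross_height c {u, w}) * (y - cross_height c {u, d})"
    using \<sigma> by auto
  finally show False using between by simp
qed

text \<open>Two crossing edges with no crossing edge between them are two sides of the
  triangle containing the segment of the line between them.\<close>

lemma consecutive_crossing_edges:
  assumes f1: "f1 \<in> crossing_edges" and f2: "f2 \<in> crossing_edges"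
    and lt: "cross_height c f1 < cross_height c f2"
    and gap: "\<forall>h\<in>crossing_edges. \<not> (cross_height c f1 < cross_height c h \<and> cross_height c h < cross_height c f2)"
  shows "card (f1 \<inter> f2) = 1" "region c f1 f2 \<inter> P \<subseteq> f1 \<inter> f2"
proof -
  define Y1 where "Y1 = cross_height c f1"
  define Y2 where "Y2 = cross_height c f2"
  define y where "y = (Y1 + Y2) / 2"
  have "(1/2) *\<^sub>R (c, Y1) + (1/2) *\<^sub>R (c, Y2) \<in> convex hull P"
    using convexD[OF convex_convex_hull crossing_point_in_hull[OF f1] crossing_point_in_hull[OF f2],
        of "1/2" "1/2"]
    unfolding Y1_def Y2_def by simp
  moreover have "(1/2) *\<^sub>R (c, Y1) + (1/2) *\<^sub>R (c, Y2) = (c, y)" unfolding y_def by (simp add: field_simps)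
  ultimately have "(c, y) \<in> convex hull P" by simp
  then obtain t where t: "t \<in> T" "(c, y) \<in> convex hull t"
    using triangulation unfolding triangulation_def by blast
  then obtain u w d where uwd: "t = {u, w, d}" "straddling_triangle c u w d"
    by (rule triangle_meeting_vline_apexE)
  interpret straddling_triangle c u w d by (fact uwd(2))
  have tT: "{u, w, d} \<in> T" using t(1) uwd(1) by simp
  have sides: "{u, w} \<in> crossing_edges" "{u, d} \<in> crossing_edges"
    using straddling_triangle_sides[OF tT uwd(2)] by auto
  have y: "Y1 < y" "y < Y2" using lt unfolding y_def Y1_def Y2_def by auto
  have outside: "\<not> (Y1 < Yw \<and> Yw < Y2)" "\<not> (Y1 < Yd \<and> Yd < Y2)"
    using gap sides unfolding Y1_def Y2_def by auto
  have "(y - Yw) * (y - Yd) \<le> 0" using vline_hull_between t(2) uwd(1) by simp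
  moreover have "y \<noteq> Yw" "y \<noteq> Yd" using outside y by auto
  ultimately have "(y - Yw) * (y - Yd) < 0" by (simp add: less_le)
  moreover have "\<not> (Y1 - Yw) * (Y1 - Yd) < 0" "\<not> (Y2 - Yw) * (Y2 - Yd) < 0"
    using f1 f2 unfolding Y1_def Y2_def
    by (elim crossing_edgesE; simp add: no_edge_crosses_inside[OF tT uwd(2)])+
  ultimately have "(Yw = Y1 \<and> Yd = Y2) \<or> (Yw = Y2 \<and> Yd = Y1)"
    using bracketing_pairs_eq[OF y] outside by blast
  moreover have eq: "g = h" if "cross_height c g = cross_height c h" "g \<in> crossing_edges" "h \<in> crossing_edges"
    for g h by (rule inj_onD[OF inj_on_cross_height that])
  ultimately consider (uw) "f1 = {u, w}" "f2 = {u, d}" | (ud) "f1 = {u, d}" "f2 = {u, w}"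
    unfolding Y1_def Y2_def using eq[OF _ f1 sides(1)] eq[OF _ f1 sides(2)] eq[OF _ f2 sides(1)]
      eq[OF _ f2 sides(2)] by argo
  moreover have int: "{u, w} \<inter> {u, d} = {u}" "{u, d} \<inter> {u, w} = {u}"
    using crossings_distinct straddles_uw straddles_ud by auto
  moreover have "convex hull {u, (c, Yd), (c, Yw)} = convex hull {u, (c, Yw), (c, Yd)}"
    by (simp add: insert_commute)
  then have "region c {u, w} {u, d} \<inter> P \<subseteq> {u}" "region c {u, d} {u, w} \<inter> P \<subseteq> {u}"
    using apex_region_empty[OF tT uwd(2)]
    unfolding region_eq_triangle[OF straddles_uw straddles_ud int(1)]
      region_eq_triangle[OF straddles_ud straddles_uw int(2)] by simp_all
  ultimately have "f1 \<inter> f2 = {u} \<and> region c f1 f2 \<inter> P \<subseteq> {u}" by cases (simp_all only:)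
  then show "card (f1 \<inter> f2) = 1" "region c f1 f2 \<inter> P \<subseteq> f1 \<inter> f2" by simp_all
qed

end

context separated_triangulation
begin

lemma crossing_edges_sorted_listE:
  obtains \<pi> where "set \<pi> = crossing_edges" "distinct \<pi>"
    "sorted_wrt (\<lambda>f g. cross_height c f < cross_height c g) \<pi>"
proof
  define ys where "ys = sorted_list_of_set (cross_height c ` crossing_edges)"
  define \<pi> where "\<pi> = map (the_inv_into crossing_edges (cross_height c)) ys"
  have set_ys: "set ys = cross_height c ` crossing_edges"
    unfolding ys_def using finite_crossing_edges by simp
  show "set \<pi> = crossing_edges"
    unfolding \<pi>_def set_map set_ys by (rule the_inv_into_onto[OF inj_on_cross_height])
  have "map (cross_height c) \<pi> = ys"
    unfolding \<pi>_def map_map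
    by (rule map_idI) (use set_ys f_the_inv_into_f[OF inj_on_cross_height] in auto)
  then have "sorted_wrt (<) (map (cross_height c) \<pi>)" "distinct (map (cross_height c) \<pi>)"
    unfolding ys_def by simp_all
  then show "sorted_wrt (\<lambda>f g. cross_height c f < cross_height c g) \<pi>" "distinct \<pi>"
    by (simp_all add: sorted_wrt_map distinct_map)
qed

text \<open>The T-path lists the crossing edges by increasing crossing height.\<close>

lemma T_path_exists:
  assumes "e \<in> crossing_edges" "\<not> hull_edge P e"
  shows "\<exists>\<pi>. is_T_path P T c \<pi>"
proof -
  obtain \<pi> where set_\<pi>: "set \<pi> = crossing_edges" and "distinct \<pi>"
    and sorted: "sorted_wrt (\<lambda>f g. cross_height c f < cross_height c g) \<pi>"
    by (rule crossing_edges_sorted_listE)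
  define Y where "Y i = cross_height c (\<pi> ! i)" for i
  define n where "n = length \<pi>"
  have less: "Y i < Y j" if "i < j" "j < n" for i j
    using sorted_wrt_nth_less[OF sorted that[unfolded n_def]] unfolding Y_def .
  have le: "Y i \<le> Y j" if "i \<le> j" "j < n" for i j
    using less[of i j] that by (cases "i < j") simp_all
  have index: "\<exists>j<n. \<pi> ! j = h" if "h \<in> crossing_edges" for h
    using that unfolding set_\<pi>[symmetric] n_def by (simp only: in_set_conv_nth)
  have nth: "\<pi> ! i \<in> crossing_edges" if "i < n" for i
    using nth_mem[of i \<pi>] that set_\<pi> unfolding n_def by blast
  obtain j where j: "j < n" "\<pi> ! j = e" using index[OF assms(1)] by blast
  then have n0: "0 < n" by simp
  have first: "hull_edge P (\<pi> ! 0)"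
  proof (rule extreme_crossing_edge_is_hull_edge[OF nth[OF n0], of 1])
    show "\<forall>h\<in>crossing_edges. 1 * cross_height c (\<pi> ! 0) \<le> 1 * cross_height c h"
    proof
      fix h assume "h \<in> crossing_edges"
      then obtain i where "i < n" "\<pi> ! i = h" using index by blast
      then show "1 * cross_height c (\<pi> ! 0) \<le> 1 * cross_height c h" using le[of 0 i] by (simp add: Y_def)
    qed
  qed simp
  have n1: "n - 1 < n" using n0 by simp
  have last: "hull_edge P (\<pi> ! (n - 1))"
  proof (rule extreme_crossing_edge_is_hull_edge[OF nth[OF n1], of "-1"])
    show "\<forall>h\<in>crossing_edges. -1 * cross_height c (\<pi> ! (n - 1)) \<le> -1 * cross_height c h"
    proof
      fix h assume "h \<in> crossing_edges"
      then obtain i where "i < n" "\<pi> ! i = h" using index by blast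
      then show "-1 * cross_height c (\<pi> ! (n - 1)) \<le> -1 * cross_height c h"
        using le[of i "n - 1"] by (simp add: Y_def)
    qed
  qed simp
  have "j \<noteq> 0"
  proof
    assume "j = 0"
    then show False using first j assms(2) by simp
  qed
  then have "Y 0 < Y (n - 1)" using less j(1) by simp
  then have ends: "\<pi> ! 0 \<noteq> \<pi> ! (n - 1)" unfolding Y_def by auto
  have consecutive: "card (\<pi> ! k \<inter> \<pi> ! Suc k) = 1
      \<and> region c (\<pi> ! k) (\<pi> ! Suc k) \<inter> P \<subseteq> \<pi> ! k \<inter> \<pi> ! Suc k"
    if k: "Suc k < n" for k
  proof -
    have "\<not> (Y k < cross_height c h \<and> cross_height c h < Y (Suc k))" if h: "h \<in> crossing_edges" for h
    proof
      assume between: "Y k < cross_height c h \<and> cross_height c h < Y (Suc k)"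
      obtain i where "i < n" "\<pi> ! i = h" using index[OF h] by blast
      then show False using le[of i k] le[of "Suc k" i] k between unfolding Y_def
        by (cases "i \<le> k") auto
    qed
    moreover have "Y k < Y (Suc k)" using less k by simp
    ultimately show ?thesis
      using consecutive_crossing_edges[OF nth[of k] nth[of "Suc k"]] k unfolding Y_def by simp
  qed
  have "\<pi> \<noteq> []" using n0 unfolding n_def by auto
  then have "hd \<pi> = \<pi> ! 0" "last \<pi> = \<pi> ! (n - 1)" unfolding n_def by (simp_all add: hd_conv_nth last_conv_nth)
  moreover have "\<forall>f\<in>set \<pi>. f \<in> edges_of T \<and> crosses c f"
    using set_\<pi> unfolding crossing_edges_def by blast
  ultimately have "is_T_path P T c \<pi>"
    using \<open>\<pi> \<noteq> []\<close> \<open>distinct \<pi>\<close> first last ends consecutive unfolding is_T_path_def n_def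
    by simp
  then show ?thesis by blast
qed

end

theorem lemma1:
  fixes P :: "pt set" and T :: "pt set set" and c :: real and e :: "pt set"
  assumes "finite P" and "general_position P"
    and "triangulation P T"
    and "separating_vline P c"
    and "good_edge P T c e"
  shows "(\<exists>\<pi>. is_T_path P T c \<pi>) \<and> (\<forall>\<pi>. is_T_path P T c \<pi> \<longrightarrow> e \<in> set \<pi>)"
proof -
  interpret separated_triangulation P T c using assms(1-4) by unfold_locales
  have "e \<in> crossing_edges" "\<not> hull_edge P e"
    using assms(5) unfolding good_edge_def flippable_def crossing_edges_def by auto
  then show ?thesis using T_path_exists T_path_contains_good_edge[OF assms(5)] by blast
qed
end
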